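(* Let $N\ge3$, $\Omega\subset\mathbb{R}^N$ a bounded domain, $1<p<\infty$, and suppose $Q$, $v$ satisfy hypothesis (H). Then $C^{0,1}_c(\Omega)$ is dense in $\mathring H^{1,p}_Q(\Omega)\cap L^2_v(\Omega)$, equipped with the norm $\|u\|_{H^{1,p}_Q}+\|u\|_{L^2_v}$.
   Context: $p'=p/(p-1)$. $Q:\Omega\to\mathbb{R}^{N\times N}$ is measurable, symmetric and positive definite a.e., with $|Q|_{\rm op}\in L^1_{loc}(\Omega)$ ($|\cdot|_{\rm op}$ the operator norm; $\sqrt Q$ defined pointwise). $v\ge0$ is a measurable weight. Hypothesis (H): $v\in L^1(\Omega)$; $|\sqrt Q(x)|_{\rm op}^p\le v(x)$ a.e.; $|(\sqrt Q)^{-1}|_{\rm op}\in L^{p'}_{loc}(\Omega)$. $L^q_v(\Omega)$ is $L^q$ w.r.t. $v\,dx$. $\mathcal L^p_Q(\Omega)$: vector fields with $\|\vec f\|_{\mathcal L^p_Q}=(\int_\Omega|\sqrt Q\vec f|^pdx)^{1/p}<\infty$. $H^{1,p}_Q(\Omega)$: completion of Lipschitz functions on $\overline\Omega$ under $\|u\|_{H^{1,p}_Q}=\|u\|_{L^p_v}+\|\nabla u\|_{\mathcal L^p_Q}$ (elements are functions in $L^p_v\cap W^{1,1}_{loc}$ with weak gradient in $\mathcal L^p_Q$); $\mathring H^{1,p}_Q(\Omega)$: closure of the compactly supported Lipschitz functions $C^{0,1}_c(\Omega)$ in $H^{1,p}_Q(\Omega)$. *)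

theory Defs
  imports "HOL-Analysis.Analysis"
begin

definition posdef_mat :: "real^'n^'n \<Rightarrow> bool" where
  "posdef_mat A \<longleftrightarrow> transpose A = A \<and> (\<forall>x. x \<noteq> 0 \<longrightarrow> 0 < x \<bullet> (A *v x))"

definition matsqrt :: "real^'n^'n \<Rightarrow> real^'n^'n" where
  "matsqrt A = (THE S. posdef_mat S \<and> S ** S = A)"

definition mat_opnorm :: "real^'n^'n \<Rightarrow> real" where
  "mat_opnorm A = onorm (\<lambda>x. A *v x)"

definition Lw_mem :: "real \<Rightarrow> ('a::euclidean_space \<Rightarrow> real) \<Rightarrow> 'a set \<Rightarrow> ('a \<Rightarrow> real) \<Rightarrow> bool" where
  "Lw_mem q v \<Omega> u \<longleftrightarrow> u \<in> borel_measurable (lebesgue_on \<Omega>) \<and>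
     (\<integral>\<^sup>+x\<in>\<Omega>. ennreal (\<bar>u x\<bar> powr q * v x) \<partial>lebesgue) < \<infinity>"

definition Lw_norm :: "real \<Rightarrow> ('a::euclidean_space \<Rightarrow> real) \<Rightarrow> 'a set \<Rightarrow> ('a \<Rightarrow> real) \<Rightarrow> real" where
  "Lw_norm q v \<Omega> u = enn2real (\<integral>\<^sup>+x\<in>\<Omega>. ennreal (\<bar>u x\<bar> powr q * v x) \<partial>lebesgue) powr (1 / q)"

definition LQ_mem :: "real \<Rightarrow> (real^'n \<Rightarrow> real^'n^'n) \<Rightarrow> (real^'n) set \<Rightarrow> (real^'n \<Rightarrow> real^'n) \<Rightarrow> bool" where
  "LQ_mem p Q \<Omega> f \<longleftrightarrow> f \<in> borel_measurable (lebesgue_on \<Omega>) \<and>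
     (\<integral>\<^sup>+x\<in>\<Omega>. ennreal (norm (matsqrt (Q x) *v f x) powr p) \<partial>lebesgue) < \<infinity>"

definition LQ_norm :: "real \<Rightarrow> (real^'n \<Rightarrow> real^'n^'n) \<Rightarrow> (real^'n) set \<Rightarrow> (real^'n \<Rightarrow> real^'n) \<Rightarrow> real" where
  "LQ_norm p Q \<Omega> f = enn2real (\<integral>\<^sup>+x\<in>\<Omega>. ennreal (norm (matsqrt (Q x) *v f x) powr p) \<partial>lebesgue) powr (1 / p)"

definition Lloc_mem :: "real \<Rightarrow> 'a::euclidean_space set \<Rightarrow> ('a \<Rightarrow> real) \<Rightarrow> bool" where
  "Lloc_mem q \<Omega> f \<longleftrightarrow> f \<in> borel_measurable (lebesgue_on \<Omega>) \<and>
     (\<forall>K. compact K \<and> K \<subseteq> \<Omega> \<longrightarrow> (\<integral>\<^sup>+x\<in>K. ennreal (\<bar>f x\<bar> powr q) \<partial>lebesgue) < \<infinity>)"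

text \<open>Compactly supported Lipschitz functions C^{0,1}_c(Omega) (extended by zero to R^N),
  and their (a.e. defined, by Rademacher) gradient.\<close>

definition lipc :: "(real^'n) set \<Rightarrow> (real^'n \<Rightarrow> real) \<Rightarrow> bool" where
  "lipc \<Omega> \<phi> \<longleftrightarrow> (\<exists>C. C-lipschitz_on UNIV \<phi>) \<and>
     compact (closure {x. \<phi> x \<noteq> 0}) \<and> closure {x. \<phi> x \<noteq> 0} \<subseteq> \<Omega>"

definition lgrad :: "(real^'n \<Rightarrow> real) \<Rightarrow> real^'n \<Rightarrow> real^'n" where
  "lgrad \<phi> x = (\<chi> i. frechet_derivative \<phi> (at x) (axis i 1))"

definition hypH :: "real \<Rightarrow> (real^'n \<Rightarrow> real^'n^'n) \<Rightarrow> (real^'n \<Rightarrow> real) \<Rightarrow> (real^'n) set \<Rightarrow> bool" where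
  "hypH p Q v \<Omega> \<longleftrightarrow>
     Q \<in> borel_measurable (lebesgue_on \<Omega>) \<and>
     (AE x in lebesgue_on \<Omega>. posdef_mat (Q x)) \<and>
     Lloc_mem 1 \<Omega> (\<lambda>x. mat_opnorm (Q x)) \<and>
     v \<in> borel_measurable (lebesgue_on \<Omega>) \<and> (\<forall>x\<in>\<Omega>. 0 \<le> v x) \<and>
     set_integrable lebesgue \<Omega> v \<and>
     (AE x in lebesgue_on \<Omega>. mat_opnorm (matsqrt (Q x)) powr p \<le> v x) \<and>
     Lloc_mem (p / (p - 1)) \<Omega> (\<lambda>x. mat_opnorm (matrix_inv (matsqrt (Q x))))"

text \<open>Norm on H^{1,p}_Q of a pair (u, grad u), and membership in the closure of
  C^{0,1}_c(Omega) (the completion is realised isometrically as pairs (u,g) in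
  L^p_v x \<L>^p_Q approximated by (phi, grad phi)).\<close>

definition H_norm :: "real \<Rightarrow> (real^'n \<Rightarrow> real^'n^'n) \<Rightarrow> (real^'n \<Rightarrow> real) \<Rightarrow> (real^'n) set \<Rightarrow>
    (real^'n \<Rightarrow> real) \<Rightarrow> (real^'n \<Rightarrow> real^'n) \<Rightarrow> real" where
  "H_norm p Q v \<Omega> u g = Lw_norm p v \<Omega> u + LQ_norm p Q \<Omega> g"

definition in_H0 :: "real \<Rightarrow> (real^'n \<Rightarrow> real^'n^'n) \<Rightarrow> (real^'n \<Rightarrow> real) \<Rightarrow> (real^'n) set \<Rightarrow>
    (real^'n \<Rightarrow> real) \<Rightarrow> (real^'n \<Rightarrow> real^'n) \<Rightarrow> bool" where
  "in_H0 p Q v \<Omega> u g \<longleftrightarrow> Lw_mem p v \<Omega> u \<and> LQ_mem p Q \<Omega> g \<and>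
     (\<exists>\<phi>. (\<forall>k. lipc \<Omega> (\<phi> k)) \<and>
        (\<lambda>k. H_norm p Q v \<Omega> (\<lambda>x. \<phi> k x - u x) (\<lambda>x. lgrad (\<phi> k) x - g x)) \<longlonglongrightarrow> 0)"

end

(*
  Compose approximants \<phi>\<^sub>k \<in> C^{0,1}_c of u with the truncation S\<^sub>M(t) = M arctan(t/M), which is
  1-Lipschitz, bounded by \<pi>M/2 and vanishes only at 0. Boundedness upgrades the L^p_v convergence
  of \<phi>\<^sub>k to L^2_v convergence of S\<^sub>M \<circ> \<phi>\<^sub>k towards S\<^sub>M \<circ> u, and S\<^sub>M \<circ> u \<rightarrow> u in L^p_v \<inter> L^2_v
  as M \<rightarrow> \<infinity> by dominated convergence. Since 0 \<le> 1 - S\<^sub>M' t \<le> min(1, t^2/M^2), the gradient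
  defect (1 - S\<^sub>M'(\<phi>\<^sub>k)) |\<surd>Q g|^p is bounded by R v |\<phi>\<^sub>k - u|^p where |\<surd>Q g|^p \<le> R v, by the
  tail of |\<surd>Q g|^p on the complement, which vanishes as R \<rightarrow> \<infinity> because |\<surd>Q g|^p \<le> v |g|^p
  by (H), and by a term in u/M. Choosing M and R first and then k gives the approximation.
*)

theory Submission
  imports Defs
begin

section \<open>Square roots of positive definite matrices\<close>

lemma symmetric_matrix_inner:
  fixes A :: "real^'n^'n"
  assumes "transpose A = A"
  shows "x \<bullet> (A *v y) = (A *v x) \<bullet> y"
  by (metis assms dot_lmul_matrix vector_transpose_matrix)

lemma matrix_vector_mult_sum: "(M::real^'n^'m) *v (\<Sum>b\<in>B. f b) = (\<Sum>b\<in>B. M *v f b)"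
  using linear_sum[OF matrix_vector_mul_linear[of M], of f B] by (simp add: o_def)

lemma quadratic_nonpos_imp_linear_coeff_zero:
  fixes b c :: real
  assumes "\<And>t. 2 * t * b + t^2 * c \<le> 0"
  shows "b = 0"
proof (rule ccontr)
  assume "b \<noteq> 0"
  define d where "d = \<bar>c\<bar> + 1"
  have "d > 0" and "2 * d + c > 0" unfolding d_def by (linarith, simp add: abs_if)
  have "2 * (b / d) * b + (b / d)^2 * c = (b / d)^2 * (2 * d + c)"
    using \<open>d > 0\<close> by (simp add: field_simps power2_eq_square)
  also have "\<dots> > 0" using \<open>b \<noteq> 0\<close> \<open>d > 0\<close> \<open>2 * d + c > 0\<close> by simp
  finally show False using assms[of "b / d"] by simp
qed

text \<open>The first variation of the Rayleigh quotient at a maximiser vanishes in every direction.\<close>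

lemma rayleigh_maximiser_eigenvector:
  fixes A :: "real^'n^'n"
  assumes sym: "transpose A = A" and S: "subspace S" and inv: "\<And>x. x \<in> S \<Longrightarrow> A *v x \<in> S"
    and x0: "x0 \<in> S" "x0 \<bullet> x0 = 1"
    and max: "\<And>w. w \<in> S \<Longrightarrow> w \<bullet> (A *v w) \<le> (x0 \<bullet> (A *v x0)) * (w \<bullet> w)"
  shows "A *v x0 = (x0 \<bullet> (A *v x0)) *\<^sub>R x0"
proof -
  define l where "l = x0 \<bullet> (A *v x0)"
  have orth: "y \<bullet> (A *v x0) = 0" if y: "y \<in> S" "y \<bullet> x0 = 0" for y
  proof (rule quadratic_nonpos_imp_linear_coeff_zero)
    fix t
    have "x0 \<bullet> (A *v y) = y \<bullet> (A *v x0)"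
      using symmetric_matrix_inner[OF sym, of x0 y] by (simp add: inner_commute)
    hence "(x0 + t *\<^sub>R y) \<bullet> (A *v (x0 + t *\<^sub>R y)) = l + 2 * t * (y \<bullet> (A *v x0)) + t^2 * (y \<bullet> (A *v y))"
      unfolding l_def by (simp add: matrix_vector_right_distrib matrix_vector_mult_scaleR
          inner_add_left inner_add_right power2_eq_square algebra_simps)
    moreover have "(x0 + t *\<^sub>R y) \<bullet> (x0 + t *\<^sub>R y) = 1 + t^2 * (y \<bullet> y)"
      using x0(2) y(2) by (simp add: inner_add_left inner_add_right inner_commute power2_eq_square)
    moreover have "x0 + t *\<^sub>R y \<in> S" using S x0(1) y by (simp add: subspace_add subspace_scale)
    ultimately show "2 * t * (y \<bullet> (A *v x0)) + t^2 * (y \<bullet> (A *v y) - l * (y \<bullet> y)) \<le> 0"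
      using max[of "x0 + t *\<^sub>R y"] unfolding l_def by (simp add: algebra_simps)
  qed
  define y where "y = A *v x0 - l *\<^sub>R x0"
  have "y \<in> S" unfolding y_def using S inv[OF x0(1)] x0(1) by (simp add: subspace_diff subspace_scale)
  moreover have "y \<bullet> x0 = 0" unfolding y_def l_def using x0(2)
    by (simp add: inner_diff_left inner_diff_right inner_commute)
  ultimately have "y \<bullet> y = 0" using orth unfolding y_def by (simp add: inner_diff_right)
  thus ?thesis unfolding y_def l_def by simp
qed

lemma symmetric_invariant_subspace_eigenvector:
  fixes A :: "real^'n^'n"
  assumes sym: "transpose A = A" and S: "subspace S" and nz: "\<exists>x\<in>S. x \<noteq> 0"
    and inv: "\<And>x. x \<in> S \<Longrightarrow> A *v x \<in> S"
  shows "\<exists>x\<in>S. norm x = 1 \<and> (\<exists>l. A *v x = l *\<^sub>R x)"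
proof -
  define K where "K = S \<inter> sphere 0 1"
  have "compact K" unfolding K_def
    by (simp add: S closed_subspace closed_Int_compact compact_sphere)
  have normalise: "w /\<^sub>R norm w \<in> K" if "w \<in> S" "w \<noteq> 0" for w
    unfolding K_def using that S by (simp add: subspace_scale)
  with nz have "K \<noteq> {}" by blast
  have "continuous_on K (\<lambda>x. x \<bullet> (A *v x))"
    by (intro continuous_intros linear_continuous_on linear_linear[THEN iffD1] matrix_vector_mul_linear)
  from continuous_attains_sup[OF \<open>compact K\<close> \<open>K \<noteq> {}\<close> this]
  obtain x0 where x0: "x0 \<in> K" and max: "\<And>y. y \<in> K \<Longrightarrow> y \<bullet> (A *v y) \<le> x0 \<bullet> (A *v x0)"
    by blast
  have x0S: "x0 \<in> S" and x0x0: "x0 \<bullet> x0 = 1" using x0 unfolding K_def by (auto simp: dot_square_norm)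
  have "w \<bullet> (A *v w) \<le> (x0 \<bullet> (A *v x0)) * (w \<bullet> w)" if "w \<in> S" for w
  proof (cases "w = 0")
    case False
    from max[OF normalise[OF that False]]
    have "(w \<bullet> (A *v w)) / (norm w)^2 \<le> x0 \<bullet> (A *v x0)"
      by (simp add: matrix_vector_mult_scaleR power2_eq_square divide_inverse mult_ac)
    thus ?thesis using False by (simp add: divide_le_eq dot_square_norm)
  qed simp
  from rayleigh_maximiser_eigenvector[OF sym S inv x0S x0x0 this]
  show ?thesis using x0S x0x0 by (auto simp: norm_eq_1)
qed

definition orthonormal_eigenvectors :: "real^'n^'n \<Rightarrow> (real^'n) set \<Rightarrow> bool" where
  "orthonormal_eigenvectors A B \<longleftrightarrow> finite B \<and> pairwise orthogonal B \<and>
     (\<forall>b\<in>B. norm b = 1 \<and> (\<exists>l. A *v b = l *\<^sub>R b))"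

lemma orthonormal_eigenvectors_inner:
  assumes "orthonormal_eigenvectors A B" "b \<in> B" "c \<in> B"
  shows "b \<bullet> c = (if b = c then 1 else 0)"
  using assms unfolding orthonormal_eigenvectors_def pairwise_def orthogonal_def
  by (cases "b = c") (auto simp: norm_eq_1)

lemma orthonormal_eigenvectors_coeff:
  assumes "orthonormal_eigenvectors A B" "c \<in> B"
  shows "c \<bullet> (\<Sum>b\<in>B. f b *\<^sub>R b) = f c"
proof -
  have "c \<bullet> (\<Sum>b\<in>B. f b *\<^sub>R b) = (\<Sum>b\<in>B. if b = c then f b else 0)"
    unfolding inner_sum_right
    by (rule sum.cong) (auto simp: orthonormal_eigenvectors_inner[OF assms])
  also have "\<dots> = f c" using assms unfolding orthonormal_eigenvectors_def by (simp add: sum.delta')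
  finally show ?thesis .
qed

text \<open>The spectral theorem, proved by extending a maximal orthonormal family of eigenvectors:
  the orthogonal complement of the family is invariant.\<close>

lemma symmetric_matrix_eigenbasis:
  fixes A :: "real^'n^'n"
  assumes sym: "transpose A = A"
  shows "\<exists>B. orthonormal_eigenvectors A B \<and> (\<forall>x. x = (\<Sum>b\<in>B. (b \<bullet> x) *\<^sub>R b))"
proof -
  have card_le: "card B \<le> DIM(real^'n)" if "orthonormal_eigenvectors A B" for B
  proof -
    have "0 \<notin> B" using that unfolding orthonormal_eigenvectors_def by auto
    hence "independent B"
      using that pairwise_orthogonal_independent unfolding orthonormal_eigenvectors_def by blast
    thus ?thesis using independent_bound by blast
  qed
  have "orthonormal_eigenvectors A {}" unfolding orthonormal_eigenvectors_def by simp
  then have "\<exists>k. (\<exists>B. orthonormal_eigenvectors A B \<and> card B = k) \<and>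
      (\<forall>k'. (\<exists>B. orthonormal_eigenvectors A B \<and> card B = k') \<longrightarrow> k' \<le> k)"
    by (intro Nat.ex_has_greatest_nat[where k = 0 and b = "DIM(real^'n)"]) (use card_le in auto)
  then obtain B where B: "orthonormal_eigenvectors A B"
    and maximal: "\<And>B'. orthonormal_eigenvectors A B' \<Longrightarrow> card B' \<le> card B"
    by blast
  show ?thesis
  proof (rule ccontr)
    assume "\<not> ?thesis"
    then obtain x where x: "x \<noteq> (\<Sum>b\<in>B. (b \<bullet> x) *\<^sub>R b)" using B by blast
    define S where "S = {y. \<forall>b\<in>B. b \<bullet> y = 0}"
    have "subspace S" unfolding subspace_def S_def by (simp add: inner_add_right)
    moreover have "x - (\<Sum>b\<in>B. (b \<bullet> x) *\<^sub>R b) \<in> S"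
      unfolding S_def using orthonormal_eigenvectors_coeff[OF B] by (simp add: inner_diff_right)
    moreover have "A *v y \<in> S" if "y \<in> S" for y
    proof -
      have "b \<bullet> (A *v y) = 0" if "b \<in> B" for b
      proof -
        obtain l where "A *v b = l *\<^sub>R b" using B \<open>b \<in> B\<close> unfolding orthonormal_eigenvectors_def by auto
        thus ?thesis using symmetric_matrix_inner[OF sym, of b y] \<open>y \<in> S\<close> \<open>b \<in> B\<close>
          unfolding S_def by simp
      qed
      thus ?thesis unfolding S_def by simp
    qed
    moreover have "x - (\<Sum>b\<in>B. (b \<bullet> x) *\<^sub>R b) \<noteq> 0" using x by simp
    ultimately obtain e where e: "e \<in> S" "norm e = 1" "\<exists>l. A *v e = l *\<^sub>R e"
      using symmetric_invariant_subspace_eigenvector[OF sym] by blast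
    have "e \<notin> B" using e unfolding S_def by (auto simp: norm_eq_1)
    have "orthonormal_eigenvectors A (insert e B)"
      using B e unfolding orthonormal_eigenvectors_def S_def pairwise_insert orthogonal_def
      by (auto simp: inner_commute)
    from maximal[OF this] show False
      using B \<open>e \<notin> B\<close> unfolding orthonormal_eigenvectors_def by simp
  qed
qed

lemma matrix_eq_on_basis:
  fixes M N :: "real^'n^'n"
  assumes "\<And>x. x = (\<Sum>b\<in>B. (b \<bullet> x) *\<^sub>R b)" and "\<And>b. b \<in> B \<Longrightarrow> M *v b = N *v b"
  shows "M = N"
proof -
  have "M *v x = N *v x" for x
    using assms(2) by (subst (1 2) assms(1)) (simp add: matrix_vector_mult_sum matrix_vector_mult_scaleR)
  thus ?thesis by (simp add: matrix_eq)
qed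

lemma posdef_mat_eigenvalue_pos:
  assumes "posdef_mat A" "b \<noteq> 0" "A *v b = l *\<^sub>R b"
  shows "0 < l"
proof -
  have "0 < b \<bullet> (A *v b)" using assms unfolding posdef_mat_def by blast
  thus ?thesis using assms(3) inner_ge_zero[of b] by (auto simp: zero_less_mult_iff)
qed

lemma posdef_sqrt_on_eigenvector:
  fixes T :: "real^'n^'n"
  assumes T: "posdef_mat T" and TT: "T ** T = A" and b: "A *v b = l *\<^sub>R b" and "0 \<le> l"
  shows "T *v b = sqrt l *\<^sub>R b"
proof -
  define s where "s = sqrt l"
  define y where "y = T *v b - s *\<^sub>R b"
  have "T *v y + s *\<^sub>R y = (T ** T) *v b - (s * s) *\<^sub>R b"
    unfolding y_def by (simp add: matrix_vector_mult_diff_distrib matrix_vector_mult_scaleR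
        matrix_vector_mul_assoc[symmetric] algebra_simps)
  also have "\<dots> = 0" using TT b \<open>0 \<le> l\<close> unfolding s_def by simp
  finally have "T *v y = - (s *\<^sub>R y)" by (simp add: add_eq_0_iff)
  hence "y \<bullet> (T *v y) = - s * (y \<bullet> y)" by simp
  moreover have "0 \<le> s * (y \<bullet> y)" unfolding s_def using \<open>0 \<le> l\<close> by simp
  ultimately have "\<not> 0 < y \<bullet> (T *v y)" by linarith
  hence "y = 0" using T unfolding posdef_mat_def by blast
  thus ?thesis unfolding y_def s_def by simp
qed

lemma posdef_mat_sqrt_unique:
  fixes A S T :: "real^'n^'n"
  assumes A: "posdef_mat A" and S: "posdef_mat S" "S ** S = A" and T: "posdef_mat T" "T ** T = A"
  shows "S = T"
proof -
  obtain B where B: "orthonormal_eigenvectors A B" and basis: "\<And>x. x = (\<Sum>b\<in>B. (b \<bullet> x) *\<^sub>R b)"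
    using symmetric_matrix_eigenbasis A unfolding posdef_mat_def by blast
  show ?thesis
  proof (rule matrix_eq_on_basis[OF basis])
    fix b assume "b \<in> B"
    then obtain l where l: "A *v b = l *\<^sub>R b" and "b \<noteq> 0"
      using B unfolding orthonormal_eigenvectors_def by force
    hence "0 \<le> l" using posdef_mat_eigenvalue_pos[OF A] by force
    show "S *v b = T *v b"
      using posdef_sqrt_on_eigenvector[OF S l \<open>0 \<le> l\<close>] posdef_sqrt_on_eigenvector[OF T l \<open>0 \<le> l\<close>]
      by simp
  qed
qed

lemma orthonormal_expansion_matrix:
  fixes A :: "real^'n^'n"
  assumes B: "orthonormal_eigenvectors A B" and basis: "\<And>x. x = (\<Sum>b\<in>B. (b \<bullet> x) *\<^sub>R b)"
    and w: "\<And>b. b \<in> B \<Longrightarrow> 0 < w b"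
  defines "S \<equiv> matrix (\<lambda>x. \<Sum>b\<in>B. (w b * (b \<bullet> x)) *\<^sub>R b)"
  shows "\<And>b. b \<in> B \<Longrightarrow> S *v b = w b *\<^sub>R b" and "posdef_mat S"
proof -
  define f where "f x = (\<Sum>b\<in>B. (w b * (b \<bullet> x)) *\<^sub>R b)" for x
  have "linear f"
    by (rule linearI) (simp_all add: f_def inner_add_right distrib_left scaleR_add_left sum.distrib
        scaleR_sum_right mult.left_commute)
  moreover have "S = matrix f" unfolding S_def f_def[abs_def] ..
  ultimately have Sf: "S *v x = f x" for x by (simp add: matrix_works)
  show "S *v b = w b *\<^sub>R b" if "b \<in> B" for b
  proof -
    have "S *v b = (\<Sum>c\<in>B. if c = b then w b *\<^sub>R b else 0)"
      unfolding Sf f_def by (rule sum.cong) (simp_all add: orthonormal_eigenvectors_inner[OF B _ that])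
    also have "\<dots> = w b *\<^sub>R b" using B that unfolding orthonormal_eigenvectors_def by (simp add: sum.delta')
    finally show ?thesis .
  qed
  have "y \<bullet> (S *v x) = (S *v y) \<bullet> x" for x y
  proof -
    have "y \<bullet> (S *v x) = (\<Sum>b\<in>B. w b * (b \<bullet> x) * (y \<bullet> b))" unfolding Sf f_def by (simp add: inner_sum_right)
    also have "\<dots> = (\<Sum>b\<in>B. w b * (b \<bullet> y) * (b \<bullet> x))" by (rule sum.cong) (simp_all add: inner_commute)
    also have "\<dots> = (S *v y) \<bullet> x" unfolding Sf f_def by (simp add: inner_sum_left)
    finally show ?thesis .
  qed
  hence "(transpose S *v x - S *v x) \<bullet> y = 0" for x y by (simp add: inner_diff_left dot_lmul_matrix[symmetric])
  hence "transpose S *v x = S *v x" for x by (metis inner_eq_zero_iff right_minus_eq)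
  hence "transpose S = S" by (simp add: matrix_eq)
  moreover have "0 < x \<bullet> (S *v x)" if "x \<noteq> 0" for x
  proof -
    obtain c where c: "c \<in> B" "c \<bullet> x \<noteq> 0"
    proof (rule ccontr)
      assume "\<not> thesis"
      hence "\<forall>c\<in>B. c \<bullet> x = 0" using that by blast
      hence "(\<Sum>b\<in>B. (b \<bullet> x) *\<^sub>R b) = 0" by simp
      with basis[of x] have "x = 0" by (rule trans)
      with \<open>x \<noteq> 0\<close> show False ..
    qed
    have "0 < w c * (c \<bullet> x)^2" using w[OF c(1)] c(2) by simp
    also have "\<dots> \<le> (\<Sum>b\<in>B. w b * (b \<bullet> x)^2)"
      by (rule member_le_sum) (use c B w in \<open>auto simp: orthonormal_eigenvectors_def less_imp_le\<close>)
    also have "\<dots> = x \<bullet> (S *v x)"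
      unfolding Sf f_def by (simp add: inner_sum_right inner_commute power2_eq_square mult.assoc)
    finally show ?thesis .
  qed
  ultimately show "posdef_mat S" unfolding posdef_mat_def by blast
qed

lemma posdef_mat_sqrt_exists:
  fixes A :: "real^'n^'n"
  assumes A: "posdef_mat A"
  shows "\<exists>S. posdef_mat S \<and> S ** S = A"
proof -
  obtain B where B: "orthonormal_eigenvectors A B" and basis: "\<And>x. x = (\<Sum>b\<in>B. (b \<bullet> x) *\<^sub>R b)"
    using symmetric_matrix_eigenbasis A unfolding posdef_mat_def by blast
  define L where "L b = (SOME l. A *v b = l *\<^sub>R b)" for b
  have AL: "A *v b = L b *\<^sub>R b" and L_pos: "0 < L b" if "b \<in> B" for b
  proof -
    have "\<exists>l. A *v b = l *\<^sub>R b" and "b \<noteq> 0" using B that unfolding orthonormal_eigenvectors_def by auto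
    from someI_ex[OF this(1)] show "A *v b = L b *\<^sub>R b" unfolding L_def .
    thus "0 < L b" using posdef_mat_eigenvalue_pos[OF A \<open>b \<noteq> 0\<close>] by blast
  qed
  define S where "S = matrix (\<lambda>x. \<Sum>b\<in>B. (sqrt (L b) * (b \<bullet> x)) *\<^sub>R b)"
  have Sb: "S *v b = sqrt (L b) *\<^sub>R b" if "b \<in> B" for b
    unfolding S_def using orthonormal_expansion_matrix(1)[OF B basis _ that, of "\<lambda>b. sqrt (L b)"] L_pos by simp
  have "posdef_mat S"
    unfolding S_def using orthonormal_expansion_matrix(2)[OF B basis, of "\<lambda>b. sqrt (L b)"] L_pos by simp
  moreover have "S ** S = A"
  proof (rule matrix_eq_on_basis[OF basis])
    fix b assume "b \<in> B"
    thus "(S ** S) *v b = A *v b"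
      using Sb AL L_pos by (simp add: matrix_vector_mul_assoc[symmetric] matrix_vector_mult_scaleR less_imp_le)
  qed
  ultimately show ?thesis by blast
qed

lemma matsqrt:
  assumes "posdef_mat A"
  shows matsqrt_posdef: "posdef_mat (matsqrt A)" and matsqrt_square: "matsqrt A ** matsqrt A = A"
proof -
  have "\<exists>!S. posdef_mat S \<and> S ** S = A"
    using posdef_mat_sqrt_exists posdef_mat_sqrt_unique assms by metis
  from theI'[OF this] show "posdef_mat (matsqrt A)" "matsqrt A ** matsqrt A = A"
    unfolding matsqrt_def by auto
qed

lemma norm_matsqrt_mult_squared:
  assumes "posdef_mat A"
  shows "(norm (matsqrt A *v y))^2 = y \<bullet> (A *v y)"
proof -
  have "transpose (matsqrt A) = matsqrt A" using matsqrt_posdef[OF assms] unfolding posdef_mat_def by simp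
  hence "(matsqrt A *v y) \<bullet> (matsqrt A *v y) = y \<bullet> (matsqrt A *v (matsqrt A *v y))"
    by (simp add: symmetric_matrix_inner)
  thus ?thesis by (simp add: dot_square_norm matrix_vector_mul_assoc matsqrt_square[OF assms])
qed

section \<open>Truncation of Lipschitz functions\<close>

definition arctan_cut :: "real \<Rightarrow> real \<Rightarrow> real" where
  "arctan_cut M t = M * arctan (t / M)"

definition arctan_cut_deriv :: "real \<Rightarrow> real \<Rightarrow> real" where
  "arctan_cut_deriv M t = 1 / (1 + (t / M)^2)"

lemma arctan_cut_has_real_derivative:
  assumes "M > 0"
  shows "(arctan_cut M has_real_derivative arctan_cut_deriv M t) (at t)"
proof -
  have "((\<lambda>t. M * arctan (t / M)) has_real_derivative M * (inverse (1 + (t/M)^2) * (1 / M))) (at t)"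
    using assms by (intro derivative_eq_intros DERIV_arctan) auto
  thus ?thesis using assms unfolding arctan_cut_def arctan_cut_deriv_def by (simp add: inverse_eq_divide)
qed

lemma arctan_cut_deriv_pos: "0 < arctan_cut_deriv M t"
  unfolding arctan_cut_deriv_def by (simp add: add_pos_nonneg)

lemma arctan_cut_deriv_le_1: "arctan_cut_deriv M t \<le> 1"
  unfolding arctan_cut_deriv_def by (simp add: divide_le_eq add_pos_nonneg)

lemma one_minus_arctan_cut_deriv_le: "1 - arctan_cut_deriv M t \<le> min 1 (t^2 / M^2)"
proof -
  define r where "r = (t / M)^2"
  have "0 \<le> r" unfolding r_def by simp
  hence "1 - arctan_cut_deriv M t = r / (1 + r)" unfolding arctan_cut_deriv_def r_def[symmetric]
    by (simp add: field_simps)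
  also have "\<dots> \<le> min 1 r" using \<open>0 \<le> r\<close> by (simp add: divide_le_eq mult_le_cancel_left1)
  finally show ?thesis unfolding r_def by (simp add: power_divide)
qed

lemma arctan_cut_lipschitz:
  assumes "M > 0"
  shows "\<bar>arctan_cut M a - arctan_cut M b\<bar> \<le> \<bar>a - b\<bar>"
proof -
  have *: "\<bar>arctan_cut M y - arctan_cut M x\<bar> \<le> \<bar>y - x\<bar>" if "x < y" for x y
  proof -
    have "\<exists>z>x. z < y \<and> arctan_cut M y - arctan_cut M x = (y - x) * arctan_cut_deriv M z"
      by (rule MVT2[OF that]) (rule arctan_cut_has_real_derivative[OF assms])
    then obtain z where "arctan_cut M y - arctan_cut M x = (y - x) * arctan_cut_deriv M z"
      by blast
    thus ?thesis using arctan_cut_deriv_pos[of M z] arctan_cut_deriv_le_1[of M z] that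
      by (simp add: abs_mult mult_le_cancel_left1)
  qed
  show ?thesis using *[of a b] *[of b a] by (cases a b rule: linorder_cases) (auto simp: abs_minus_commute)
qed

lemma abs_arctan_cut_le:
  assumes "M > 0"
  shows "\<bar>arctan_cut M t\<bar> \<le> M * pi / 2"
proof -
  have "\<bar>arctan (t / M)\<bar> \<le> pi / 2" using arctan_bounded[of "t / M"] by linarith
  thus ?thesis unfolding arctan_cut_def using assms by (simp add: abs_mult)
qed

lemma arctan_cut_eq_0_iff: "M > 0 \<Longrightarrow> arctan_cut M t = 0 \<longleftrightarrow> t = 0"
  unfolding arctan_cut_def by simp

lemma tan_arctan_cut: "M > 0 \<Longrightarrow> M * tan (arctan_cut M t / M) = t"
  unfolding arctan_cut_def by (simp add: tan_arctan)

lemma abs_arctan_cut_minus_le: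
  assumes "M > 0"
  shows "\<bar>arctan_cut M t - t\<bar> \<le> \<bar>t\<bar>"
proof -
  have "\<bar>arctan (t / M)\<bar> \<le> \<bar>t / M\<bar>" by (rule abs_arctan_le)
  hence "\<bar>arctan_cut M t\<bar> \<le> \<bar>t\<bar>" unfolding arctan_cut_def using assms by (simp add: abs_mult field_simps)
  moreover have "0 \<le> t \<longleftrightarrow> 0 \<le> arctan_cut M t" unfolding arctan_cut_def using assms
    by (simp add: zero_le_mult_iff zero_le_divide_iff)
  ultimately show ?thesis by linarith
qed

lemma arctan_cut_tendsto: "(\<lambda>n. arctan_cut (real (Suc n)) t) \<longlonglongrightarrow> t"
proof (cases "t = 0")
  case True thus ?thesis by (simp add: arctan_cut_def)
next
  case False
  have "((\<lambda>y. arctan y / y) \<longlongrightarrow> 1) (at 0)"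
    using DERIV_arctan[of 0] unfolding has_field_derivative_iff by simp
  moreover have "filterlim (\<lambda>n. t / real (Suc n)) (at 0) sequentially"
    using False by (intro filterlim_atI tendsto_divide_0[OF tendsto_const]
        filterlim_at_top_imp_at_infinity filterlim_real_sequentially[THEN filterlim_sequentially_Suc[THEN iffD2]]) auto
  ultimately have "(\<lambda>n. t * (arctan (t / real (Suc n)) / (t / real (Suc n)))) \<longlonglongrightarrow> t * 1"
    by (intro tendsto_mult tendsto_const) (rule filterlim_compose)
  moreover have "t * (arctan (t / real (Suc n)) / (t / real (Suc n))) = arctan_cut (real (Suc n)) t" for n
    unfolding arctan_cut_def using False by (simp add: field_simps)
  ultimately show ?thesis by simp
qed

lemma continuous_on_arctan_cut: "continuous_on UNIV (arctan_cut M)"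
  unfolding arctan_cut_def by (cases "M = 0") (auto intro!: continuous_intros)

lemma borel_measurable_arctan_cut [measurable (raw)]:
  "f \<in> borel_measurable M \<Longrightarrow> (\<lambda>x. arctan_cut c (f x)) \<in> borel_measurable M"
  by (erule measurable_compose) (rule borel_measurable_continuous_onI[OF continuous_on_arctan_cut])

lemma frechet_derivative_not_differentiable:
  assumes "\<not> f differentiable (at x)" "\<not> g differentiable (at x)"
  shows "frechet_derivative f (at x) = frechet_derivative g (at x)"
proof -
  have "(\<lambda>D. (f has_derivative D) (at x)) = (\<lambda>D. (g has_derivative D) (at x))"
    using assms unfolding differentiable_def by auto
  thus ?thesis unfolding frechet_derivative_def by simp
qed

lemma lgrad_arctan_cut:
  fixes \<phi> :: "real^'n \<Rightarrow> real"
  assumes "M > 0" and "\<phi> differentiable (at x)"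
  shows "lgrad (\<lambda>y. arctan_cut M (\<phi> y)) x = arctan_cut_deriv M (\<phi> x) *\<^sub>R lgrad \<phi> x"
proof -
  define D where "D = frechet_derivative \<phi> (at x)"
  have "(\<phi> has_derivative D) (at x)" using assms(2) unfolding D_def by (simp add: frechet_derivative_works)
  moreover have "(arctan_cut M has_derivative (\<lambda>h. arctan_cut_deriv M (\<phi> x) * h)) (at (\<phi> x))"
    using arctan_cut_has_real_derivative[OF assms(1)] unfolding has_field_derivative_def by simp
  ultimately have "((\<lambda>y. arctan_cut M (\<phi> y)) has_derivative (\<lambda>h. arctan_cut_deriv M (\<phi> x) * D h)) (at x)"
    by (rule has_derivative_compose)
  hence "frechet_derivative (\<lambda>y. arctan_cut M (\<phi> y)) (at x) = (\<lambda>h. arctan_cut_deriv M (\<phi> x) * D h)"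
    by (simp add: frechet_derivative_at[symmetric])
  thus ?thesis unfolding lgrad_def D_def by (simp add: vec_eq_iff)
qed

lemma differentiable_arctan_cut_comp_imp:
  fixes \<phi> :: "'a::real_normed_vector \<Rightarrow> real"
  assumes "M > 0" and "(\<lambda>y. arctan_cut M (\<phi> y)) differentiable (at x)"
  shows "\<phi> differentiable (at x)"
proof -
  define s where "s = arctan_cut M (\<phi> x)"
  have "cos (s / M) \<noteq> 0" unfolding s_def arctan_cut_def using assms(1) by simp
  hence "((\<lambda>r. M * tan (r / M)) has_real_derivative M * (inverse ((cos (s / M))\<^sup>2) * (1 / M))) (at s)"
    using assms(1) by (intro derivative_eq_intros DERIV_tan) auto
  hence "(\<lambda>r. M * tan (r / M)) differentiable (at (arctan_cut M (\<phi> x)))"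
    unfolding s_def has_field_derivative_def differentiable_def by blast
  from differentiable_chain_at[OF assms(2) this]
  have "(\<lambda>y. M * tan (arctan_cut M (\<phi> y) / M)) differentiable (at x)" by (simp add: o_def)
  thus ?thesis using tan_arctan_cut[OF assms(1)] by simp
qed

text \<open>Where \<open>\<phi>\<close> is not differentiable, neither is its composite, and both gradients are the same
  junk value.\<close>

lemma norm_lgrad_arctan_cut_le:
  fixes \<phi> :: "real^'n \<Rightarrow> real" and A :: "real^'n^'n"
  assumes "M > 0"
  shows "norm (A *v (lgrad (\<lambda>y. arctan_cut M (\<phi> y)) x - \<gamma>))
     \<le> norm (A *v (lgrad \<phi> x - \<gamma>)) + (1 - arctan_cut_deriv M (\<phi> x)) * norm (A *v \<gamma>)"
proof (cases "\<phi> differentiable (at x)")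
  case True
  define s where "s = arctan_cut_deriv M (\<phi> x)"
  have s: "0 \<le> s" "s \<le> 1"
    unfolding s_def using arctan_cut_deriv_pos[of M "\<phi> x"] arctan_cut_deriv_le_1[of M "\<phi> x"] by auto
  have "lgrad (\<lambda>y. arctan_cut M (\<phi> y)) x - \<gamma> = s *\<^sub>R (lgrad \<phi> x - \<gamma>) - (1 - s) *\<^sub>R \<gamma>"
    using lgrad_arctan_cut[OF assms True] unfolding s_def by (simp add: algebra_simps)
  hence "A *v (lgrad (\<lambda>y. arctan_cut M (\<phi> y)) x - \<gamma>) = s *\<^sub>R (A *v (lgrad \<phi> x - \<gamma>)) - (1 - s) *\<^sub>R (A *v \<gamma>)"
    by (simp add: matrix_vector_mult_diff_distrib matrix_vector_mult_scaleR)
  also have "norm \<dots> \<le> s * norm (A *v (lgrad \<phi> x - \<gamma>)) + (1 - s) * norm (A *v \<gamma>)"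
    by (rule order_trans[OF norm_triangle_ineq4]) (simp add: s)
  also have "\<dots> \<le> norm (A *v (lgrad \<phi> x - \<gamma>)) + (1 - s) * norm (A *v \<gamma>)"
    using s by (simp add: mult_left_le_one_le)
  finally show ?thesis unfolding s_def .
next
  case False
  hence "\<not> (\<lambda>y. arctan_cut M (\<phi> y)) differentiable (at x)"
    using differentiable_arctan_cut_comp_imp[OF assms] by blast
  with False have "lgrad (\<lambda>y. arctan_cut M (\<phi> y)) x = lgrad \<phi> x"
    unfolding lgrad_def using frechet_derivative_not_differentiable by metis
  thus ?thesis using arctan_cut_deriv_le_1[of M "\<phi> x"] by simp
qed

lemma lipschitz_has_derivative_bound:
  fixes f :: "'a::real_normed_vector \<Rightarrow> real"
  assumes L: "C-lipschitz_on UNIV f" and D: "(f has_derivative D) (at x)"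
  shows "\<bar>D y\<bar> \<le> C * norm y"
proof -
  have "((\<lambda>t. x + t *\<^sub>R y) has_derivative (\<lambda>t. t *\<^sub>R y)) (at 0)"
    by (intro derivative_eq_intros) auto
  from has_derivative_compose[OF this, of f D] D
  have "((\<lambda>t. f (x + t *\<^sub>R y)) has_derivative (\<lambda>t. D (t *\<^sub>R y))) (at 0)" by simp
  moreover have "(\<lambda>t. D (t *\<^sub>R y)) = (\<lambda>t. D y * t)"
    using has_derivative_linear[OF D] by (simp add: linear_scale mult.commute)
  ultimately have "((\<lambda>t. f (x + t *\<^sub>R y)) has_field_derivative D y) (at 0)"
    unfolding has_field_derivative_def by simp
  hence lim: "((\<lambda>t. (f (x + t *\<^sub>R y) - f x) / t) \<longlongrightarrow> D y) (at 0)"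
    unfolding has_field_derivative_iff by simp
  have "\<forall>\<^sub>F t in at 0. \<bar>(f (x + t *\<^sub>R y) - f x) / t\<bar> \<le> C * norm y"
  proof (rule eventually_at_filter[THEN iffD2], rule always_eventually, intro allI impI)
    fix t :: real assume "t \<noteq> 0"
    have "\<bar>f (x + t *\<^sub>R y) - f x\<bar> \<le> C * dist (x + t *\<^sub>R y) x"
      using L unfolding lipschitz_on_def by (metis UNIV_I dist_real_def)
    also have "\<dots> = C * (\<bar>t\<bar> * norm y)" by (simp add: dist_norm)
    finally show "\<bar>(f (x + t *\<^sub>R y) - f x) / t\<bar> \<le> C * norm y"
      using \<open>t \<noteq> 0\<close> by (simp add: abs_divide divide_le_eq mult_ac)
  qed
  from tendsto_upperbound[OF tendsto_rabs[OF lim] this] show ?thesis by simp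
qed

lemma lgrad_bounded:
  fixes \<phi> :: "real^'n \<Rightarrow> real"
  assumes L: "C-lipschitz_on UNIV \<phi>"
  shows "\<exists>K. \<forall>x. norm (lgrad \<phi> x) \<le> K"
proof -
  define junk :: "real^'n" where "junk = (\<chi> i. (SOME D::real^'n \<Rightarrow> real. False) (axis i 1))"
  have "norm (lgrad \<phi> x) \<le> real CARD('n) * C + norm junk" for x
  proof (cases "\<phi> differentiable (at x)")
    case True
    hence D: "(\<phi> has_derivative frechet_derivative \<phi> (at x)) (at x)" by (simp add: frechet_derivative_works)
    have "norm (lgrad \<phi> x) \<le> (\<Sum>i\<in>UNIV. \<bar>lgrad \<phi> x $ i\<bar>)" by (rule norm_le_l1_cart)
    also have "\<dots> \<le> (\<Sum>i\<in>(UNIV::'n set). C)"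
    proof (rule sum_mono)
      fix i :: 'n
      show "\<bar>lgrad \<phi> x $ i\<bar> \<le> C"
        using lipschitz_has_derivative_bound[OF L D, of "axis i 1"] unfolding lgrad_def by simp
    qed
    finally show ?thesis by (simp add: add_increasing2)
  next
    case False
    hence "lgrad \<phi> x = junk" unfolding lgrad_def junk_def frechet_derivative_def differentiable_def by simp
    thus ?thesis using L by (simp add: lipschitz_on_def)
  qed
  thus ?thesis by blast
qed

lemma lipc_arctan_cut:
  assumes "M > 0" and "lipc \<Omega> \<phi>"
  shows "lipc \<Omega> (\<lambda>y. arctan_cut M (\<phi> y))"
proof -
  obtain C where C: "C-lipschitz_on UNIV \<phi>" using assms(2) unfolding lipc_def by blast
  have "C-lipschitz_on UNIV (\<lambda>y. arctan_cut M (\<phi> y))"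
    unfolding lipschitz_on_def
  proof (intro conjI ballI)
    show "0 \<le> C" using C by (simp add: lipschitz_on_def)
    fix x y
    have "dist (arctan_cut M (\<phi> x)) (arctan_cut M (\<phi> y)) \<le> dist (\<phi> x) (\<phi> y)"
      using arctan_cut_lipschitz[OF assms(1)] by (simp add: dist_real_def)
    also have "\<dots> \<le> C * dist x y" using C unfolding lipschitz_on_def by auto
    finally show "dist (arctan_cut M (\<phi> x)) (arctan_cut M (\<phi> y)) \<le> C * dist x y" .
  qed
  moreover have "{x. arctan_cut M (\<phi> x) \<noteq> 0} = {x. \<phi> x \<noteq> 0}"
    using arctan_cut_eq_0_iff[OF assms(1)] by auto
  ultimately show ?thesis using assms(2) unfolding lipc_def by auto
qed

lemma lipc_bounded:
  assumes "lipc \<Omega> \<phi>"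
  shows "\<exists>B. \<forall>x. \<bar>\<phi> x\<bar> \<le> B"
proof -
  obtain C where C: "C-lipschitz_on UNIV \<phi>" and K: "compact (closure {x. \<phi> x \<noteq> 0})"
    using assms unfolding lipc_def by blast
  have "compact (\<phi> ` closure {x. \<phi> x \<noteq> 0})"
    using K lipschitz_on_continuous_on[OF C] by (metis compact_continuous_image continuous_on_subset subset_UNIV)
  then obtain B where B: "\<And>y. y \<in> \<phi> ` closure {x. \<phi> x \<noteq> 0} \<Longrightarrow> \<bar>y\<bar> \<le> B"
    unfolding real_norm_def[symmetric] by (meson compact_imp_bounded bounded_iff)
  have "\<bar>\<phi> x\<bar> \<le> max B 0" for x
    using B[of "\<phi> x"] closure_subset[of "{x. \<phi> x \<noteq> 0}"] by (cases "\<phi> x = 0") auto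
  thus ?thesis by blast
qed

section \<open>Elementary and integral inequalities\<close>

lemma powr_add_le:
  fixes a b p :: real
  assumes "0 \<le> a" "0 \<le> b" "0 < p"
  shows "(a + b) powr p \<le> 2 powr p * (a powr p + b powr p)"
proof -
  have "(a + b) powr p \<le> (2 * max a b) powr p" using assms by (intro powr_mono2) auto
  also have "\<dots> = 2 powr p * max a b powr p" using assms by (simp add: powr_mult)
  also have "max a b powr p \<le> a powr p + b powr p" by (simp add: max_def)
  finally show ?thesis by simp
qed

lemma powr_add3_le:
  fixes a b c p :: real
  assumes "0 \<le> a" "0 \<le> b" "0 \<le> c" "0 < p"
  shows "(a + b + c) powr p \<le> 3 powr p * (a powr p + b powr p + c powr p)"
proof -
  have "(a + b + c) powr p \<le> (3 * max a (max b c)) powr p" using assms by (intro powr_mono2) auto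
  also have "\<dots> = 3 powr p * max a (max b c) powr p" using assms by (simp add: powr_mult)
  also have "max a (max b c) powr p \<le> a powr p + b powr p + c powr p" by (simp add: max_def)
  finally show ?thesis by simp
qed

lemma square_le_powr_split:
  fixes z K W \<delta> p :: real
  assumes "0 \<le> z" "z \<le> K" "z \<le> W" "0 < \<delta>" "0 < p"
  shows "z^2 \<le> \<delta>^2 + K^2 / \<delta> powr p * W powr p"
proof (cases "z \<le> \<delta>")
  case True
  hence "z^2 \<le> \<delta>^2" using assms by (intro power_mono) auto
  thus ?thesis by (simp add: add_increasing2)
next
  case False
  hence "1 \<le> W powr p / \<delta> powr p" using assms by (simp add: powr_mono2)
  hence "K^2 * 1 \<le> K^2 * (W powr p / \<delta> powr p)" by (intro mult_left_mono) auto
  hence "K^2 \<le> K^2 / \<delta> powr p * W powr p" by simp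
  moreover have "z^2 \<le> K^2" using assms by (intro power_mono) auto
  ultimately show ?thesis by (simp add: add_increasing)
qed

lemma min_one_two_square_le: "min 1 (2 * w^2) \<le> 2 * \<bar>w::real\<bar>"
proof (cases "\<bar>w\<bar> \<le> 1/2")
  case True
  have "2 * w^2 = 2 * \<bar>w\<bar> * \<bar>w\<bar>" by (simp add: power2_eq_square)
  also have "\<dots> \<le> 2 * \<bar>w\<bar>" using True mult_left_mono[of "\<bar>w\<bar>" 1 "2 * \<bar>w\<bar>"] by simp
  finally show ?thesis by linarith
qed linarith

lemma min_one_square_add_le:
  fixes w a M :: real
  assumes "1 \<le> M"
  shows "min 1 ((w + a)^2 / M^2) \<le> min 1 (2 * w^2) + min 1 (2 * a^2 / M^2)"
proof -
  have M2: "1 \<le> M^2" using assms by (simp add: one_le_power)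
  have "(w + a)^2 \<le> 2 * w^2 + 2 * a^2"
    using zero_le_power2[of "w - a"] by (simp add: power2_eq_square algebra_simps)
  hence "(w + a)^2 / M^2 \<le> 2 * w^2 / M^2 + 2 * a^2 / M^2"
    using M2 by (simp add: divide_right_mono add_divide_distrib[symmetric])
  also have "2 * w^2 / M^2 \<le> 2 * w^2" using M2 by (simp add: divide_le_eq mult_le_cancel_left1)
  finally have "min 1 ((w + a)^2 / M^2) \<le> min 1 (2 * w^2 + 2 * a^2 / M^2)" by simp
  also have "\<dots> \<le> min 1 (2 * w^2) + min 1 (2 * a^2 / M^2)"
  proof -
    have "min 1 (y + z) \<le> min 1 y + min 1 z" if "0 \<le> y" "0 \<le> z" for y z :: real
      using that by (simp add: min_def)
    thus ?thesis by simp
  qed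
  finally show ?thesis .
qed

text \<open>Where \<open>H \<le> R v\<close> the small factor is paid for by the weight \<open>v\<close>, elsewhere by \<open>H\<close> itself.\<close>

lemma min_one_two_square_powr_mult_le:
  fixes w H R v p :: real
  assumes "0 < p" "0 \<le> H" "0 \<le> R" "0 \<le> v"
  shows "min 1 (2 * w^2) powr p * H \<le> R * 2 powr p * (\<bar>w\<bar> powr p * v) + (if H > R * v then H else 0)"
proof (cases "H > R * v")
  case True
  have "min 1 (2 * w^2) powr p \<le> 1" using assms powr_mono2[of p "min 1 (2 * w^2)" 1] by simp
  hence "min 1 (2 * w^2) powr p * H \<le> H" using assms by (simp add: mult_left_le_one_le)
  thus ?thesis using True assms by (simp add: add_increasing)
next
  case False
  have "min 1 (2 * w^2) powr p \<le> (2 * \<bar>w\<bar>) powr p"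
    using assms min_one_two_square_le[of w] by (intro powr_mono2) auto
  hence "min 1 (2 * w^2) powr p * H \<le> (2 * \<bar>w\<bar>) powr p * (R * v)"
    using assms False by (intro mult_mono) auto
  thus ?thesis using False by (simp add: powr_mult mult_ac)
qed

lemma norm_lgrad_arctan_cut_powr_le:
  fixes \<phi> :: "real^'n \<Rightarrow> real" and A :: "real^'n^'n"
  assumes "1 \<le> M" "0 < p" "0 \<le> R" "0 \<le> v" and H: "H = norm (A *v \<gamma>) powr p"
  shows "norm (A *v (lgrad (\<lambda>y. arctan_cut M (\<phi> y)) x - \<gamma>)) powr p
     \<le> 3 powr p * norm (A *v (lgrad \<phi> x - \<gamma>)) powr p
       + 3 powr p * (R * 2 powr p * (\<bar>\<phi> x - a\<bar> powr p * v) + (if H > R * v then H else 0)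
         + min 1 (2 * a^2 / M^2) powr p * H)"
proof -
  define X where "X = norm (A *v (lgrad \<phi> x - \<gamma>))"
  define m1 where "m1 = min 1 (2 * (\<phi> x - a)^2)"
  define m2 where "m2 = min 1 (2 * a^2 / M^2)"
  have m: "0 \<le> m1" "0 \<le> m2" unfolding m1_def m2_def by auto
  have "1 - arctan_cut_deriv M (\<phi> x) \<le> min 1 (((\<phi> x - a) + a)^2 / M^2)"
    using one_minus_arctan_cut_deriv_le by simp
  also have "\<dots> \<le> m1 + m2" unfolding m1_def m2_def by (rule min_one_square_add_le[OF assms(1)])
  finally have "(1 - arctan_cut_deriv M (\<phi> x)) * norm (A *v \<gamma>) \<le> (m1 + m2) * norm (A *v \<gamma>)"
    by (rule mult_right_mono) simp
  moreover have "norm (A *v (lgrad (\<lambda>y. arctan_cut M (\<phi> y)) x - \<gamma>))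
      \<le> X + (1 - arctan_cut_deriv M (\<phi> x)) * norm (A *v \<gamma>)"
    unfolding X_def using assms(1) by (intro norm_lgrad_arctan_cut_le) simp
  ultimately have "norm (A *v (lgrad (\<lambda>y. arctan_cut M (\<phi> y)) x - \<gamma>))
      \<le> X + m1 * norm (A *v \<gamma>) + m2 * norm (A *v \<gamma>)"
    by (simp add: distrib_right add.assoc)
  hence "norm (A *v (lgrad (\<lambda>y. arctan_cut M (\<phi> y)) x - \<gamma>)) powr p
      \<le> (X + m1 * norm (A *v \<gamma>) + m2 * norm (A *v \<gamma>)) powr p"
    using assms(2) by (intro powr_mono2) auto
  also have "\<dots> \<le> 3 powr p * (X powr p + m1 powr p * H + m2 powr p * H)"
    using powr_add3_le[of X "m1 * norm (A *v \<gamma>)" "m2 * norm (A *v \<gamma>)" p] assms(2) m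
    unfolding H X_def by (simp add: powr_mult)
  also have "m1 powr p * H \<le> R * 2 powr p * (\<bar>\<phi> x - a\<bar> powr p * v) + (if H > R * v then H else 0)"
    unfolding m1_def using assms H by (intro min_one_two_square_powr_mult_le) auto
  finally show ?thesis unfolding X_def m2_def by (simp add: distrib_left add.assoc)
qed

text \<open>The integrand \<open>f\<close> need not be measurable (integrands involving \<open>lgrad\<close> are not known to be).\<close>

lemma nn_integral_add_le:
  assumes g: "g \<in> borel_measurable M"
  shows "(\<integral>\<^sup>+x. f x + g x \<partial>M) \<le> (\<integral>\<^sup>+x. f x \<partial>M) + (\<integral>\<^sup>+x. g x \<partial>M)"
proof -
  have "integral\<^sup>S M s \<le> (\<integral>\<^sup>+x. f x \<partial>M) + (\<integral>\<^sup>+x. g x \<partial>M)"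
    if s: "simple_function M s" "s \<le> (\<lambda>x. f x + g x)" "\<forall>x. s x < top" for s
  proof -
    have "integral\<^sup>S M s = (\<integral>\<^sup>+x. s x \<partial>M)" using s(1) by (simp add: nn_integral_eq_simple_integral)
    also have "\<dots> \<le> (\<integral>\<^sup>+x. (s x - g x) + g x \<partial>M)"
      by (rule nn_integral_mono) (simp only: diff_add_self_ennreal, auto simp: not_le intro: less_imp_le)
    also have "\<dots> = (\<integral>\<^sup>+x. s x - g x \<partial>M) + (\<integral>\<^sup>+x. g x \<partial>M)"
      using borel_measurable_simple_function[OF s(1)] g by (intro nn_integral_add borel_measurable_minus_ennreal)
    also have "(\<integral>\<^sup>+x. s x - g x \<partial>M) \<le> (\<integral>\<^sup>+x. f x \<partial>M)"
    proof (rule nn_integral_mono)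
      fix x
      have "s x \<le> g x + f x" using s(2) by (simp add: le_fun_def add.commute)
      thus "s x - g x \<le> f x" using s(3)[rule_format, of x] unfolding ennreal_minus_le_iff by auto
    qed
    finally show ?thesis by (simp add: add_right_mono)
  qed
  thus ?thesis unfolding nn_integral_def_finite[of M "\<lambda>x. f x + g x"] by (intro SUP_least) blast
qed

lemma nn_integral_cmult_le:
  assumes r: "r > 0"
  shows "(\<integral>\<^sup>+x. ennreal r * f x \<partial>M) \<le> ennreal r * (\<integral>\<^sup>+x. f x \<partial>M)"
proof -
  have inv: "ennreal r * ennreal (1 / r) = 1" using r by (simp add: ennreal_mult[symmetric])
  have "integral\<^sup>S M s \<le> ennreal r * (\<integral>\<^sup>+x. f x \<partial>M)"
    if s: "simple_function M s" "s \<le> (\<lambda>x. ennreal r * f x)" for s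
  proof -
    define s' where "s' x = s x * ennreal (1 / r)" for x
    have s': "simple_function M s'" unfolding s'_def using s(1) by (rule simple_function_compose1)
    have "s = (\<lambda>x. ennreal r * s' x)"
      unfolding s'_def by (metis (lifting) mult.comm_neutral mult.left_commute inv)
    hence "integral\<^sup>S M s = ennreal r * (\<integral>\<^sup>+x. s' x \<partial>M)"
      using s' by (simp add: nn_integral_eq_simple_integral)
    also have "(\<integral>\<^sup>+x. s' x \<partial>M) \<le> (\<integral>\<^sup>+x. f x \<partial>M)"
    proof (rule nn_integral_mono)
      fix x
      have "s' x \<le> ennreal r * f x * ennreal (1 / r)"
        unfolding s'_def using s(2) by (metis le_funE mult_right_mono zero_le)
      thus "s' x \<le> f x" by (metis inv mult.assoc mult.commute mult.right_neutral)
    qed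
    finally show ?thesis by (metis mult_left_mono zero_le)
  qed
  thus ?thesis unfolding nn_integral_def[of M "\<lambda>x. ennreal r * f x"] by (intro SUP_least) blast
qed

lemma nn_integral_le_lincomb3:
  fixes F f1 f2 f3 :: "'a \<Rightarrow> real"
  assumes [measurable]: "f1 \<in> borel_measurable M" "f2 \<in> borel_measurable M" "f3 \<in> borel_measurable M"
    and nonneg: "AE x in M. 0 \<le> f1 x \<and> 0 \<le> f2 x \<and> 0 \<le> f3 x"
    and c: "0 \<le> c1" "0 \<le> c2" "0 \<le> c3"
    and le: "AE x in M. F x \<le> c1 * f1 x + c2 * f2 x + c3 * f3 x"
  shows "(\<integral>\<^sup>+x. ennreal (F x) \<partial>M) \<le> ennreal c1 * (\<integral>\<^sup>+x. ennreal (f1 x) \<partial>M)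
     + ennreal c2 * (\<integral>\<^sup>+x. ennreal (f2 x) \<partial>M) + ennreal c3 * (\<integral>\<^sup>+x. ennreal (f3 x) \<partial>M)"
proof -
  have "AE x in M. ennreal (F x) \<le> ennreal c1 * ennreal (f1 x) + ennreal c2 * ennreal (f2 x) + ennreal c3 * ennreal (f3 x)"
    using nonneg le
  proof eventually_elim
    case (elim x)
    hence "ennreal (F x) \<le> ennreal (c1 * f1 x + c2 * f2 x + c3 * f3 x)" by (intro ennreal_leI) auto
    thus ?case using elim c by (simp add: ennreal_mult)
  qed
  hence "(\<integral>\<^sup>+x. ennreal (F x) \<partial>M)
      \<le> (\<integral>\<^sup>+x. ennreal c1 * ennreal (f1 x) + ennreal c2 * ennreal (f2 x) + ennreal c3 * ennreal (f3 x) \<partial>M)"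
    by (rule nn_integral_mono_AE)
  also have "\<dots> = ennreal c1 * (\<integral>\<^sup>+x. ennreal (f1 x) \<partial>M)
     + ennreal c2 * (\<integral>\<^sup>+x. ennreal (f2 x) \<partial>M) + ennreal c3 * (\<integral>\<^sup>+x. ennreal (f3 x) \<partial>M)"
    by (simp add: nn_integral_add nn_integral_cmult)
  finally show ?thesis .
qed

lemma nn_integral_le_lincomb2:
  fixes F f1 f2 :: "'a \<Rightarrow> real"
  assumes "f1 \<in> borel_measurable M" "f2 \<in> borel_measurable M"
    and "AE x in M. 0 \<le> f1 x \<and> 0 \<le> f2 x" and "0 \<le> c1" "0 \<le> c2"
    and "AE x in M. F x \<le> c1 * f1 x + c2 * f2 x"
  shows "(\<integral>\<^sup>+x. ennreal (F x) \<partial>M) \<le> ennreal c1 * (\<integral>\<^sup>+x. ennreal (f1 x) \<partial>M)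
     + ennreal c2 * (\<integral>\<^sup>+x. ennreal (f2 x) \<partial>M)"
  using nn_integral_le_lincomb3[of f1 M f2 "\<lambda>_. 0" c1 c2 0 F] assms by simp

lemma nn_integral_tendsto_0_dominated:
  fixes f :: "nat \<Rightarrow> 'a \<Rightarrow> real"
  assumes [measurable]: "\<And>n. f n \<in> borel_measurable M" "w \<in> borel_measurable M"
    and bound: "\<And>n. AE x in M. 0 \<le> f n x \<and> f n x \<le> w x"
    and "(\<integral>\<^sup>+x. ennreal (w x) \<partial>M) < \<infinity>"
    and lim: "AE x in M. (\<lambda>n. f n x) \<longlonglongrightarrow> 0"
  shows "(\<lambda>n. \<integral>\<^sup>+x. ennreal (f n x) \<partial>M) \<longlonglongrightarrow> 0"
proof -
  have "(\<lambda>n. \<integral>\<^sup>+x. ennreal (f n x) \<partial>M) \<longlonglongrightarrow> (\<integral>\<^sup>+x. ennreal 0 \<partial>M)"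
  proof (rule nn_integral_dominated_convergence[where w="\<lambda>x. ennreal (w x)"])
    show "AE x in M. ennreal (f j x) \<le> ennreal (w x)" for j
      using bound[of j] by eventually_elim (simp add: ennreal_leI)
    show "AE x in M. (\<lambda>i. ennreal (f i x)) \<longlonglongrightarrow> ennreal 0"
      using lim by eventually_elim (rule tendsto_ennrealI)
  qed (use assms in auto)
  thus ?thesis by simp
qed

lemma tendsto_0_of_enn2real_powr:
  fixes a :: "nat \<Rightarrow> ennreal"
  assumes "\<And>k. a k < \<infinity>" "0 < r" "(\<lambda>k. enn2real (a k) powr r) \<longlonglongrightarrow> 0"
  shows "a \<longlonglongrightarrow> 0"
proof -
  have "(\<lambda>k. (enn2real (a k) powr r) powr (1 / r)) \<longlonglongrightarrow> 0"
    by (rule tendsto_zero_powrI[OF assms(3) tendsto_const]) (use assms(2) in auto)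
  hence "(\<lambda>k. ennreal (enn2real (a k))) \<longlonglongrightarrow> 0"
    using assms(2) by (simp add: powr_powr ennreal_tendsto_0_iff)
  moreover have "ennreal (enn2real (a k)) = a k" for k
    using assms(1)[of k] by (simp add: ennreal_enn2real_if less_top[symmetric])
  ultimately show ?thesis by simp
qed

lemma enn2real_powr_tendsto_0:
  fixes a :: "nat \<Rightarrow> ennreal"
  assumes "a \<longlonglongrightarrow> 0" "0 < r"
  shows "(\<lambda>k. enn2real (a k) powr r) \<longlonglongrightarrow> 0"
proof -
  have "(\<lambda>k. enn2real (a k)) \<longlonglongrightarrow> 0" using tendsto_enn2real[of a 0] assms(1) by simp
  thus ?thesis using assms(2) by (intro tendsto_zero_powrI[OF _ tendsto_const]) auto
qed

lemma tendsto_const_div_Suc_square: "(\<lambda>n. c / (real (Suc n))^2) \<longlonglongrightarrow> 0"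
proof -
  have "(\<lambda>n. c * (inverse (real (Suc n)))^2) \<longlonglongrightarrow> c * 0^2"
    by (intro tendsto_intros LIMSEQ_inverse_real_of_nat)
  thus ?thesis by (simp add: divide_inverse power_inverse)
qed

lemma tendsto_cmult_ennreal_0:
  fixes f :: "'a \<Rightarrow> ennreal"
  assumes "(f \<longlongrightarrow> 0) F" "c \<noteq> \<infinity>"
  shows "((\<lambda>x. c * f x) \<longlongrightarrow> 0) F"
  using tendsto_mult_ennreal[OF tendsto_const assms(1), of c] assms(2) by simp

lemma eventually_less_of_le_tendsto:
  fixes x b :: "'a \<Rightarrow> 'b::linorder_topology"
  assumes "\<And>k. x k \<le> b k" "(b \<longlongrightarrow> l) F" "l < \<eta>"
  shows "\<forall>\<^sub>F k in F. x k < \<eta>"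
  using order_tendstoD(2)[OF assms(2,3)] by eventually_elim (rule order.strict_trans1[OF assms(1)])

lemma borel_measurable_vec_nth [measurable (raw)]:
  fixes f :: "'a \<Rightarrow> 'b::real_normed_vector^'n"
  shows "f \<in> borel_measurable M \<Longrightarrow> (\<lambda>x. f x $ i) \<in> borel_measurable M"
  by (erule measurable_compose) (intro borel_measurable_continuous_onI linear_continuous_on bounded_linear_vec_nth)

lemma borel_measurable_quadratic_form [measurable (raw)]:
  fixes Q :: "'a \<Rightarrow> real^'n^'n" and g :: "'a \<Rightarrow> real^'n"
  assumes [measurable]: "Q \<in> borel_measurable M" "g \<in> borel_measurable M"
  shows "(\<lambda>x. g x \<bullet> (Q x *v g x)) \<in> borel_measurable M"
  unfolding inner_vec_def matrix_vector_mult_def vec_lambda_beta by measurable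

lemma norm_matrix_vector_mult_le: "norm ((A::real^'n^'n) *v y) \<le> mat_opnorm A * norm y"
  unfolding mat_opnorm_def by (rule onorm) (rule matrix_vector_mul_bounded_linear)

lemma mat_opnorm_nonneg: "0 \<le> mat_opnorm (A::real^'n^'n)"
  unfolding mat_opnorm_def by (rule onorm_pos_le) (rule matrix_vector_mul_bounded_linear)

section \<open>Approximation under hypothesis (H)\<close>

locale weighted_sobolev =
  fixes \<Omega> :: "(real^'n) set" and p :: real
    and Q :: "real^'n \<Rightarrow> real^'n^'n" and v :: "real^'n \<Rightarrow> real"
  assumes sets_domain: "\<Omega> \<in> sets lebesgue" and p_pos: "0 < p" and hypH: "hypH p Q v \<Omega>"
begin

abbreviation \<mu> where "\<mu> \<equiv> lebesgue_on \<Omega>"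

lemma space_domain [simp]: "space \<mu> = \<Omega>"
  using sets_domain by simp

lemma nn_set_integral_domain: "(\<integral>\<^sup>+x\<in>\<Omega>. f x \<partial>lebesgue) = (\<integral>\<^sup>+x. f x \<partial>\<mu>)"
  using sets_domain by (simp add: nn_integral_restrict_space)

lemma measurable_Q [measurable]: "Q \<in> borel_measurable \<mu>"
  and measurable_v [measurable]: "v \<in> borel_measurable \<mu>"
  and AE_posdef_Q: "AE x in \<mu>. posdef_mat (Q x)"
  and weight_nonneg: "x \<in> \<Omega> \<Longrightarrow> 0 \<le> v x"
  using hypH unfolding hypH_def by auto

lemma weight_integral_finite: "(\<integral>\<^sup>+x. ennreal (v x) \<partial>\<mu>) < \<infinity>"
proof -
  have "integrable \<mu> v" using hypH sets_domain unfolding hypH_def set_integrable_def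
    by (subst integrable_restrict_space) simp_all
  hence "(\<integral>\<^sup>+x. ennreal (norm (v x)) \<partial>\<mu>) < \<infinity>" by (simp add: integrable_iff_bounded)
  moreover have "(\<integral>\<^sup>+x. ennreal (norm (v x)) \<partial>\<mu>) = (\<integral>\<^sup>+x. ennreal (v x) \<partial>\<mu>)"
    by (rule nn_integral_cong) (simp add: weight_nonneg)
  ultimately show ?thesis by simp
qed

lemma AE_norm_matsqrt_powr_le:
  "AE x in \<mu>. \<forall>y. norm (matsqrt (Q x) *v y) powr p \<le> v x * norm y powr p"
proof -
  have "AE x in \<mu>. mat_opnorm (matsqrt (Q x)) powr p \<le> v x" using hypH unfolding hypH_def by blast
  thus ?thesis
  proof eventually_elim
    case (elim x)
    show ?case
    proof
      fix y
      have "norm (matsqrt (Q x) *v y) powr p \<le> (mat_opnorm (matsqrt (Q x)) * norm y) powr p"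
        using p_pos by (intro powr_mono2 norm_matrix_vector_mult_le) auto
      also have "\<dots> = mat_opnorm (matsqrt (Q x)) powr p * norm y powr p"
        using mat_opnorm_nonneg by (simp add: powr_mult)
      also have "\<dots> \<le> v x * norm y powr p" using elim by (simp add: mult_right_mono)
      finally show "norm (matsqrt (Q x) *v y) powr p \<le> v x * norm y powr p" .
    qed
  qed
qed

lemma lipc_borel_measurable: "lipc \<Omega> f \<Longrightarrow> f \<in> borel_measurable \<mu>"
  unfolding lipc_def
  by (metis continuous_imp_measurable_on_sets_lebesgue continuous_on_subset lipschitz_on_continuous_on
      sets_domain subset_UNIV)

end

locale weighted_sobolev_target = weighted_sobolev +
  fixes u and g
  assumes u_Lp: "Lw_mem p v \<Omega> u" and u_L2: "Lw_mem 2 v \<Omega> u" and g_LQ: "LQ_mem p Q \<Omega> g"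
begin

definition Lw_err :: "real \<Rightarrow> _ \<Rightarrow> ennreal" where
  "Lw_err q f = (\<integral>\<^sup>+x. ennreal (\<bar>f x - u x\<bar> powr q * v x) \<partial>\<mu>)"

definition LQ_err :: "_ \<Rightarrow> ennreal" where
  "LQ_err f = (\<integral>\<^sup>+x. ennreal (norm (matsqrt (Q x) *v (lgrad f x - g x)) powr p) \<partial>\<mu>)"

text \<open>This is \<open>|\<surd>Q g|\<^sup>p\<close> almost everywhere, written through \<open>Q\<close> itself so that it is
  measurable (\<open>matsqrt\<close> is defined by a description).\<close>

definition g_density :: "_ \<Rightarrow> real" where
  "g_density x = sqrt (g x \<bullet> (Q x *v g x)) powr p"

lemma measurable_u [measurable]: "u \<in> borel_measurable \<mu>"
  and measurable_g [measurable]: "g \<in> borel_measurable \<mu>"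
  using u_Lp g_LQ unfolding Lw_mem_def LQ_mem_def by auto

lemma u_powr_integral_finite:
  "(\<integral>\<^sup>+x. ennreal (\<bar>u x\<bar> powr p * v x) \<partial>\<mu>) < \<infinity>"
  "(\<integral>\<^sup>+x. ennreal (\<bar>u x\<bar> powr 2 * v x) \<partial>\<mu>) < \<infinity>"
  using u_Lp u_L2 unfolding Lw_mem_def nn_set_integral_domain by auto

lemma measurable_g_density [measurable]: "g_density \<in> borel_measurable \<mu>"
  unfolding g_density_def by measurable

lemma g_density_nonneg: "0 \<le> g_density x"
  unfolding g_density_def by simp

lemma AE_g_density_eq: "AE x in \<mu>. norm (matsqrt (Q x) *v g x) powr p = g_density x"
  using AE_posdef_Q
proof eventually_elim
  case (elim x)
  from norm_matsqrt_mult_squared[OF this, of "g x"]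
  have "norm (matsqrt (Q x) *v g x) = sqrt (g x \<bullet> (Q x *v g x))" by (metis norm_ge_zero real_sqrt_unique)
  thus ?case unfolding g_density_def by simp
qed

lemma g_density_integral_finite: "(\<integral>\<^sup>+x. ennreal (g_density x) \<partial>\<mu>) < \<infinity>"
proof -
  have "(\<integral>\<^sup>+x. ennreal (g_density x) \<partial>\<mu>) = (\<integral>\<^sup>+x. ennreal (norm (matsqrt (Q x) *v g x) powr p) \<partial>\<mu>)"
    using AE_g_density_eq by (intro nn_integral_cong_AE) (auto elim!: AE_mp)
  thus ?thesis using g_LQ unfolding LQ_mem_def nn_set_integral_domain by simp
qed

lemma AE_g_density_le: "AE x in \<mu>. g_density x \<le> v x * norm (g x) powr p"
  using AE_g_density_eq AE_norm_matsqrt_powr_le by eventually_elim metis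

lemma Lw_err_arctan_cut_le:
  assumes [measurable]: "f \<in> borel_measurable \<mu>" and "0 < M" "0 < q"
  shows "Lw_err q (\<lambda>x. arctan_cut M (f x))
    \<le> ennreal (2 powr q) * Lw_err q f + ennreal (2 powr q) * Lw_err q (\<lambda>x. arctan_cut M (u x))"
  unfolding Lw_err_def
proof (rule nn_integral_le_lincomb2)
  show "AE x in \<mu>. \<bar>arctan_cut M (f x) - u x\<bar> powr q * v x
      \<le> 2 powr q * (\<bar>f x - u x\<bar> powr q * v x) + 2 powr q * (\<bar>arctan_cut M (u x) - u x\<bar> powr q * v x)"
  proof (rule AE_I2)
    fix x assume "x \<in> space \<mu>"
    have "\<bar>arctan_cut M (f x) - u x\<bar> \<le> \<bar>f x - u x\<bar> + \<bar>arctan_cut M (u x) - u x\<bar>"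
      using arctan_cut_lipschitz[OF \<open>0 < M\<close>, of "f x" "u x"] by linarith
    hence "\<bar>arctan_cut M (f x) - u x\<bar> powr q \<le> (\<bar>f x - u x\<bar> + \<bar>arctan_cut M (u x) - u x\<bar>) powr q"
      using \<open>0 < q\<close> by (intro powr_mono2) auto
    also have "\<dots> \<le> 2 powr q * (\<bar>f x - u x\<bar> powr q + \<bar>arctan_cut M (u x) - u x\<bar> powr q)"
      using \<open>0 < q\<close> by (intro powr_add_le) auto
    finally show "\<bar>arctan_cut M (f x) - u x\<bar> powr q * v x
      \<le> 2 powr q * (\<bar>f x - u x\<bar> powr q * v x) + 2 powr q * (\<bar>arctan_cut M (u x) - u x\<bar> powr q * v x)"
      using weight_nonneg[of x] \<open>x \<in> space \<mu>\<close> mult_right_mono by (fastforce simp: algebra_simps)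
  qed
qed (use weight_nonneg in auto)

lemma Lw_err_2_arctan_cut_le:
  assumes [measurable]: "f \<in> borel_measurable \<mu>" and "0 < M" "0 < \<delta>"
  shows "Lw_err 2 (\<lambda>x. arctan_cut M (f x))
    \<le> ennreal (2 * \<delta>^2) * (\<integral>\<^sup>+x. ennreal (v x) \<partial>\<mu>)
      + ennreal (2 * (M * pi)^2 / \<delta> powr p) * Lw_err p f
      + ennreal 2 * Lw_err 2 (\<lambda>x. arctan_cut M (u x))"
  unfolding Lw_err_def
proof (rule nn_integral_le_lincomb3)
  show "AE x in \<mu>. \<bar>arctan_cut M (f x) - u x\<bar> powr 2 * v x \<le> 2 * \<delta>^2 * v x
      + 2 * (M * pi)^2 / \<delta> powr p * (\<bar>f x - u x\<bar> powr p * v x)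
      + 2 * (\<bar>arctan_cut M (u x) - u x\<bar> powr 2 * v x)"
  proof (rule AE_I2)
    fix x assume "x \<in> space \<mu>"
    define z where "z = \<bar>arctan_cut M (f x) - arctan_cut M (u x)\<bar>"
    define e where "e = \<bar>arctan_cut M (u x) - u x\<bar>"
    have "z \<le> M * pi"
      using abs_arctan_cut_le[OF \<open>0 < M\<close>, of "f x"] abs_arctan_cut_le[OF \<open>0 < M\<close>, of "u x"]
      unfolding z_def by linarith
    moreover have "z \<le> \<bar>f x - u x\<bar>" unfolding z_def by (rule arctan_cut_lipschitz[OF \<open>0 < M\<close>])
    ultimately have z2: "z^2 \<le> \<delta>^2 + (M * pi)^2 / \<delta> powr p * \<bar>f x - u x\<bar> powr p"
      using \<open>0 < \<delta>\<close> p_pos by (intro square_le_powr_split) (auto simp: z_def)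
    have "\<bar>arctan_cut M (f x) - u x\<bar> \<le> z + e" unfolding z_def e_def by linarith
    hence "(arctan_cut M (f x) - u x)^2 \<le> (z + e)^2"
      by (metis abs_ge_zero power2_abs power_mono)
    also have "\<dots> \<le> 2 * z^2 + 2 * e^2"
      using zero_le_power2[of "z - e"] by (simp add: power2_eq_square algebra_simps)
    finally have "(arctan_cut M (f x) - u x)^2 * v x
        \<le> (2 * \<delta>^2 + 2 * (M * pi)^2 / \<delta> powr p * \<bar>f x - u x\<bar> powr p + 2 * e^2) * v x"
      using z2 weight_nonneg[of x] \<open>x \<in> space \<mu>\<close> by (intro mult_right_mono) auto
    moreover have "\<bar>y\<bar> powr 2 = y^2" for y :: real by (cases "y = 0") simp_all
    ultimately show "\<bar>arctan_cut M (f x) - u x\<bar> powr 2 * v x \<le> 2 * \<delta>^2 * v x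
      + 2 * (M * pi)^2 / \<delta> powr p * (\<bar>f x - u x\<bar> powr p * v x)
      + 2 * (\<bar>arctan_cut M (u x) - u x\<bar> powr 2 * v x)"
      unfolding e_def by (simp add: distrib_right mult.assoc)
  qed
qed (use weight_nonneg in auto)

lemma AE_LQ_integrand_arctan_cut_le:
  assumes "1 \<le> M" "0 \<le> R"
  shows "AE x in \<mu>. norm (matsqrt (Q x) *v (lgrad (\<lambda>x. arctan_cut M (f x)) x - g x)) powr p
    \<le> 3 powr p * norm (matsqrt (Q x) *v (lgrad f x - g x)) powr p
      + 3 powr p * (R * 2 powr p * (\<bar>f x - u x\<bar> powr p * v x)
        + (if g_density x > R * v x then g_density x else 0) + min 1 (2 * (u x)^2 / M^2) powr p * g_density x)"
  using AE_space AE_g_density_eq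
proof eventually_elim
  case (elim x)
  thus ?case using weight_nonneg[of x] assms p_pos by (intro norm_lgrad_arctan_cut_powr_le) auto
qed

lemma LQ_err_arctan_cut_le:
  assumes [measurable]: "f \<in> borel_measurable \<mu>" and "1 \<le> M" "0 \<le> R"
  shows "LQ_err (\<lambda>x. arctan_cut M (f x))
    \<le> ennreal (3 powr p) * LQ_err f + (ennreal (3 powr p * R * 2 powr p) * Lw_err p f
      + ennreal (3 powr p) * (\<integral>\<^sup>+x. ennreal (if g_density x > R * v x then g_density x else 0) \<partial>\<mu>)
      + ennreal (3 powr p) * (\<integral>\<^sup>+x. ennreal (min 1 (2 * (u x)^2 / M^2) powr p * g_density x) \<partial>\<mu>))"
proof -
  define X where "X x = norm (matsqrt (Q x) *v (lgrad f x - g x)) powr p" for x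
  define B where "B x = R * 2 powr p * (\<bar>f x - u x\<bar> powr p * v x)
      + (if g_density x > R * v x then g_density x else 0) + min 1 (2 * (u x)^2 / M^2) powr p * g_density x" for x
  have [measurable]: "B \<in> borel_measurable \<mu>" unfolding B_def by measurable
  have "AE x in \<mu>. ennreal (norm (matsqrt (Q x) *v (lgrad (\<lambda>x. arctan_cut M (f x)) x - g x)) powr p)
      \<le> ennreal (3 powr p) * ennreal (X x) + ennreal (3 powr p * B x)"
    using AE_space AE_LQ_integrand_arctan_cut_le[OF assms(2,3), of f]
  proof eventually_elim
    case (elim x)
    have "0 \<le> B x" unfolding B_def using weight_nonneg[of x] elim(1) g_density_nonneg[of x] assms(3) by simp
    have "ennreal (norm (matsqrt (Q x) *v (lgrad (\<lambda>x. arctan_cut M (f x)) x - g x)) powr p)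
      \<le> ennreal (3 powr p * X x + 3 powr p * B x)" using elim(2) unfolding X_def B_def by (rule ennreal_leI)
    also have "\<dots> = ennreal (3 powr p) * ennreal (X x) + ennreal (3 powr p * B x)"
      using \<open>0 \<le> B x\<close> unfolding X_def by (simp add: ennreal_mult)
    finally show ?case .
  qed
  hence "LQ_err (\<lambda>x. arctan_cut M (f x))
      \<le> (\<integral>\<^sup>+x. ennreal (3 powr p) * ennreal (X x) \<partial>\<mu>) + (\<integral>\<^sup>+x. ennreal (3 powr p * B x) \<partial>\<mu>)"
    unfolding LQ_err_def by (rule order_trans[OF nn_integral_mono_AE nn_integral_add_le]) measurable
  also have "\<dots> \<le> ennreal (3 powr p) * LQ_err f + (ennreal (3 powr p * R * 2 powr p) * Lw_err p f
      + ennreal (3 powr p) * (\<integral>\<^sup>+x. ennreal (if g_density x > R * v x then g_density x else 0) \<partial>\<mu>)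
      + ennreal (3 powr p) * (\<integral>\<^sup>+x. ennreal (min 1 (2 * (u x)^2 / M^2) powr p * g_density x) \<partial>\<mu>))"
    unfolding LQ_err_def Lw_err_def X_def
  proof (rule add_mono[OF nn_integral_cmult_le nn_integral_le_lincomb3])
    show "AE x in \<mu>. 3 powr p * B x \<le> 3 powr p * R * 2 powr p * (\<bar>f x - u x\<bar> powr p * v x)
        + 3 powr p * (if g_density x > R * v x then g_density x else 0)
        + 3 powr p * (min 1 (2 * (u x)^2 / M^2) powr p * g_density x)"
      unfolding B_def by (simp add: distrib_left mult.assoc)
    show "AE x in \<mu>. 0 \<le> \<bar>f x - u x\<bar> powr p * v x \<and> 0 \<le> (if g_density x > R * v x then g_density x else 0)
        \<and> 0 \<le> min 1 (2 * (u x)^2 / M^2) powr p * g_density x"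
      using weight_nonneg g_density_nonneg by (auto intro: AE_I2)
  qed (use \<open>0 \<le> R\<close> in simp_all)
  finally show ?thesis .
qed

lemma Lw_err_arctan_cut_u_tendsto_0:
  assumes "0 < q" and "(\<integral>\<^sup>+x. ennreal (\<bar>u x\<bar> powr q * v x) \<partial>\<mu>) < \<infinity>"
  shows "(\<lambda>n. Lw_err q (\<lambda>x. arctan_cut (real (Suc n)) (u x))) \<longlonglongrightarrow> 0"
  unfolding Lw_err_def
proof (rule nn_integral_tendsto_0_dominated[where w="\<lambda>x. \<bar>u x\<bar> powr q * v x"])
  show "AE x in \<mu>. 0 \<le> \<bar>arctan_cut (real (Suc n)) (u x) - u x\<bar> powr q * v x
      \<and> \<bar>arctan_cut (real (Suc n)) (u x) - u x\<bar> powr q * v x \<le> \<bar>u x\<bar> powr q * v x" for n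
  proof (rule AE_I2)
    fix x assume "x \<in> space \<mu>"
    have "\<bar>arctan_cut (real (Suc n)) (u x) - u x\<bar> powr q \<le> \<bar>u x\<bar> powr q"
      using abs_arctan_cut_minus_le[of "real (Suc n)" "u x"] \<open>0 < q\<close> by (intro powr_mono2) auto
    thus "0 \<le> \<bar>arctan_cut (real (Suc n)) (u x) - u x\<bar> powr q * v x
      \<and> \<bar>arctan_cut (real (Suc n)) (u x) - u x\<bar> powr q * v x \<le> \<bar>u x\<bar> powr q * v x"
      using weight_nonneg[of x] \<open>x \<in> space \<mu>\<close> by (simp add: mult_right_mono)
  qed
  show "AE x in \<mu>. (\<lambda>n. \<bar>arctan_cut (real (Suc n)) (u x) - u x\<bar> powr q * v x) \<longlonglongrightarrow> 0"
  proof (rule AE_I2)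
    fix x
    have "(\<lambda>n. \<bar>arctan_cut (real (Suc n)) (u x) - u x\<bar>) \<longlonglongrightarrow> 0"
      using tendsto_diff[OF arctan_cut_tendsto[of "u x"] tendsto_const[of "u x"]]
      by (simp add: tendsto_rabs_zero_iff)
    hence "(\<lambda>n. \<bar>arctan_cut (real (Suc n)) (u x) - u x\<bar> powr q) \<longlonglongrightarrow> 0"
      using \<open>0 < q\<close> by (intro tendsto_zero_powrI[OF _ tendsto_const]) auto
    thus "(\<lambda>n. \<bar>arctan_cut (real (Suc n)) (u x) - u x\<bar> powr q * v x) \<longlonglongrightarrow> 0"
      by (rule tendsto_mult_left_zero)
  qed
  show "(\<lambda>x. \<bar>arctan_cut (real (Suc n)) (u x) - u x\<bar> powr q * v x) \<in> borel_measurable \<mu>" for n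
    by measurable
qed (use assms(2) in simp_all)

lemma truncation_weight_tendsto_0:
  "(\<lambda>n. \<integral>\<^sup>+x. ennreal (min 1 (2 * (u x)^2 / (real (Suc n))^2) powr p * g_density x) \<partial>\<mu>) \<longlonglongrightarrow> 0"
proof (rule nn_integral_tendsto_0_dominated[where w=g_density])
  show "AE x in \<mu>. 0 \<le> min 1 (2 * (u x)^2 / (real (Suc n))^2) powr p * g_density x
      \<and> min 1 (2 * (u x)^2 / (real (Suc n))^2) powr p * g_density x \<le> g_density x" for n
  proof (rule AE_I2)
    fix x
    have "min 1 (2 * (u x)^2 / (real (Suc n))^2) powr p \<le> 1"
      using p_pos powr_mono2[of p "min 1 (2 * (u x)^2 / (real (Suc n))^2)" 1] by simp
    thus "0 \<le> min 1 (2 * (u x)^2 / (real (Suc n))^2) powr p * g_density x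
      \<and> min 1 (2 * (u x)^2 / (real (Suc n))^2) powr p * g_density x \<le> g_density x"
      using g_density_nonneg[of x] by (simp add: mult_left_le_one_le)
  qed
  show "AE x in \<mu>. (\<lambda>n. min 1 (2 * (u x)^2 / (real (Suc n))^2) powr p * g_density x) \<longlonglongrightarrow> 0"
  proof (rule AE_I2)
    fix x
    have "(\<lambda>n. min 1 (2 * (u x)^2 / (real (Suc n))^2)) \<longlonglongrightarrow> min 1 0"
      by (intro tendsto_min tendsto_const tendsto_const_div_Suc_square)
    hence "(\<lambda>n. min 1 (2 * (u x)^2 / (real (Suc n))^2) powr p) \<longlonglongrightarrow> 0"
      using p_pos by (intro tendsto_zero_powrI[OF _ tendsto_const]) auto
    thus "(\<lambda>n. min 1 (2 * (u x)^2 / (real (Suc n))^2) powr p * g_density x) \<longlonglongrightarrow> 0"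
      by (rule tendsto_mult_left_zero)
  qed
  show "(\<lambda>x. min 1 (2 * (u x)^2 / (real (Suc n))^2) powr p * g_density x) \<in> borel_measurable \<mu>" for n
    by measurable
qed (use g_density_integral_finite in simp_all)

lemma large_g_density_tendsto_0:
  "(\<lambda>n. \<integral>\<^sup>+x. ennreal (if g_density x > real n * v x then g_density x else 0) \<partial>\<mu>) \<longlonglongrightarrow> 0"
proof (rule nn_integral_tendsto_0_dominated[where w=g_density])
  show "AE x in \<mu>. 0 \<le> (if g_density x > real n * v x then g_density x else 0)
      \<and> (if g_density x > real n * v x then g_density x else 0) \<le> g_density x" for n
    using g_density_nonneg by (intro AE_I2) auto
  show "AE x in \<mu>. (\<lambda>n. if g_density x > real n * v x then g_density x else 0) \<longlonglongrightarrow> 0"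
    using AE_g_density_le
  proof (rule AE_mp, intro AE_I2 impI)
    fix x assume "x \<in> space \<mu>" and le: "g_density x \<le> v x * norm (g x) powr p"
    have "\<forall>\<^sub>F n in sequentially. (if g_density x > real n * v x then g_density x else 0) = 0"
    proof (cases "v x = 0")
      case True
      thus ?thesis using le g_density_nonneg[of x] by simp
    next
      case False
      hence "0 < v x" using weight_nonneg[of x] \<open>x \<in> space \<mu>\<close> by simp
      obtain N :: nat where "g_density x / v x < real N" using reals_Archimedean2 by blast
      hence "g_density x < real N * v x" using \<open>0 < v x\<close> by (simp add: divide_less_eq)
      also have "\<dots> \<le> real n * v x" if "N \<le> n" for n using that \<open>0 < v x\<close> by (simp add: mult_right_mono)
      finally have "\<forall>n\<ge>N. (if g_density x > real n * v x then g_density x else 0) = 0"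
        by (metis order.asym)
      thus ?thesis unfolding eventually_sequentially by blast
    qed
    thus "(\<lambda>n. if g_density x > real n * v x then g_density x else 0) \<longlonglongrightarrow> 0"
      by (rule tendsto_eventually)
  qed
qed (use g_density_integral_finite in simp_all)

lemma Lw_err_lipc_finite:
  assumes "lipc \<Omega> f"
  shows "Lw_err p f < \<infinity>"
proof -
  obtain B where B: "\<And>x. \<bar>f x\<bar> \<le> B" using lipc_bounded[OF assms] by blast
  have "0 \<le> B" using B[of 0] abs_ge_zero[of "f 0"] by linarith
  have [measurable]: "f \<in> borel_measurable \<mu>" by (rule lipc_borel_measurable[OF assms])
  have "Lw_err p f \<le> ennreal (2 powr p * B powr p) * (\<integral>\<^sup>+x. ennreal (v x) \<partial>\<mu>)
     + ennreal (2 powr p) * (\<integral>\<^sup>+x. ennreal (\<bar>u x\<bar> powr p * v x) \<partial>\<mu>)"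
    unfolding Lw_err_def
  proof (rule nn_integral_le_lincomb2)
    show "AE x in \<mu>. \<bar>f x - u x\<bar> powr p * v x \<le> 2 powr p * B powr p * v x + 2 powr p * (\<bar>u x\<bar> powr p * v x)"
    proof (rule AE_I2)
      fix x assume "x \<in> space \<mu>"
      have "\<bar>f x - u x\<bar> powr p \<le> (B + \<bar>u x\<bar>) powr p"
        using B[of x] p_pos by (intro powr_mono2) auto
      also have "\<dots> \<le> 2 powr p * (B powr p + \<bar>u x\<bar> powr p)" using \<open>0 \<le> B\<close> p_pos by (intro powr_add_le) auto
      finally show "\<bar>f x - u x\<bar> powr p * v x \<le> 2 powr p * B powr p * v x + 2 powr p * (\<bar>u x\<bar> powr p * v x)"
        using weight_nonneg[of x] \<open>x \<in> space \<mu>\<close> mult_right_mono by (fastforce simp: algebra_simps)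
    qed
  qed (use weight_nonneg in auto)
  also have "\<dots> < \<infinity>"
    using weight_integral_finite u_powr_integral_finite by (simp add: ennreal_mult_less_top)
  finally show ?thesis .
qed

lemma LQ_err_lipc_finite:
  assumes "lipc \<Omega> f"
  shows "LQ_err f < \<infinity>"
proof -
  obtain C where "C-lipschitz_on UNIV f" using assms unfolding lipc_def by blast
  then obtain K where K: "\<And>x. norm (lgrad f x) \<le> K" using lgrad_bounded by blast
  have "0 \<le> K" using K[of 0] norm_ge_zero[of "lgrad f 0"] by linarith
  have "LQ_err f \<le> ennreal (2 powr p * K powr p) * (\<integral>\<^sup>+x. ennreal (v x) \<partial>\<mu>)
     + ennreal (2 powr p) * (\<integral>\<^sup>+x. ennreal (g_density x) \<partial>\<mu>)"
    unfolding LQ_err_def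
  proof (rule nn_integral_le_lincomb2)
    show "AE x in \<mu>. norm (matsqrt (Q x) *v (lgrad f x - g x)) powr p \<le> 2 powr p * K powr p * v x + 2 powr p * g_density x"
      using AE_space AE_g_density_eq AE_norm_matsqrt_powr_le
    proof eventually_elim
      case (elim x)
      have "norm (matsqrt (Q x) *v (lgrad f x - g x)) powr p
          \<le> (norm (matsqrt (Q x) *v lgrad f x) + norm (matsqrt (Q x) *v g x)) powr p"
        using p_pos by (intro powr_mono2) (auto simp: matrix_vector_mult_diff_distrib norm_triangle_ineq4)
      also have "\<dots> \<le> 2 powr p * (norm (matsqrt (Q x) *v lgrad f x) powr p + norm (matsqrt (Q x) *v g x) powr p)"
        using p_pos by (intro powr_add_le) auto
      also have "norm (matsqrt (Q x) *v lgrad f x) powr p \<le> v x * norm (lgrad f x) powr p"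
        using elim(3) by blast
      also have "\<dots> \<le> v x * K powr p"
        using weight_nonneg[of x] elim(1) K[of x] p_pos by (intro mult_left_mono powr_mono2) auto
      finally show ?case using elim by (simp add: algebra_simps)
    qed
  qed (use weight_nonneg g_density_nonneg in auto)
  also have "\<dots> < \<infinity>"
    using weight_integral_finite g_density_integral_finite by (simp add: ennreal_mult_less_top)
  finally show ?thesis .
qed

lemma H_norm_eq:
  "H_norm p Q v \<Omega> (\<lambda>x. f x - u x) (\<lambda>x. lgrad f x - g x)
    = enn2real (Lw_err p f) powr (1 / p) + enn2real (LQ_err f) powr (1 / p)"
  unfolding H_norm_def Lw_norm_def LQ_norm_def Lw_err_def LQ_err_def nn_set_integral_domain ..

lemma Lw_norm_2_eq: "Lw_norm 2 v \<Omega> (\<lambda>x. f x - u x) = enn2real (Lw_err 2 f) powr (1 / 2)"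
  unfolding Lw_norm_def Lw_err_def nn_set_integral_domain ..

text \<open>Since \<open>enn2real \<infinity> = 0\<close>, the convergence of the norms only controls errors known to be finite.\<close>

lemma errs_tendsto_0_of_H_norm:
  assumes lipc: "\<And>k. lipc \<Omega> (\<phi> k)"
    and "(\<lambda>k. H_norm p Q v \<Omega> (\<lambda>x. \<phi> k x - u x) (\<lambda>x. lgrad (\<phi> k) x - g x)) \<longlonglongrightarrow> 0"
  shows "(\<lambda>k. Lw_err p (\<phi> k)) \<longlonglongrightarrow> 0" and "(\<lambda>k. LQ_err (\<phi> k)) \<longlonglongrightarrow> 0"
proof -
  have sum: "(\<lambda>k. enn2real (Lw_err p (\<phi> k)) powr (1 / p) + enn2real (LQ_err (\<phi> k)) powr (1 / p)) \<longlonglongrightarrow> 0"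
    using assms(2) by (simp add: H_norm_eq)
  have "(\<lambda>k. enn2real (Lw_err p (\<phi> k)) powr (1 / p)) \<longlonglongrightarrow> 0"
    by (rule tendsto_sandwich[OF _ _ tendsto_const sum]) auto
  thus "(\<lambda>k. Lw_err p (\<phi> k)) \<longlonglongrightarrow> 0"
    using Lw_err_lipc_finite[OF lipc] p_pos by (intro tendsto_0_of_enn2real_powr) auto
  have "(\<lambda>k. enn2real (LQ_err (\<phi> k)) powr (1 / p)) \<longlonglongrightarrow> 0"
    by (rule tendsto_sandwich[OF _ _ tendsto_const sum]) auto
  thus "(\<lambda>k. LQ_err (\<phi> k)) \<longlonglongrightarrow> 0"
    using LQ_err_lipc_finite[OF lipc] p_pos by (intro tendsto_0_of_enn2real_powr) auto
qed

lemma eventually_truncation_tails_less: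
  assumes "0 < \<eta>"
  shows "\<forall>\<^sub>F n in sequentially.
    ennreal (2 powr p) * Lw_err p (\<lambda>x. arctan_cut (real (Suc n)) (u x)) < \<eta>
    \<and> ennreal (2 * (1 / real (Suc n))^2) * (\<integral>\<^sup>+x. ennreal (v x) \<partial>\<mu>)
        + ennreal 2 * Lw_err 2 (\<lambda>x. arctan_cut (real (Suc n)) (u x)) < \<eta>
    \<and> ennreal (3 powr p) * (\<integral>\<^sup>+x. ennreal (if g_density x > real n * v x then g_density x else 0) \<partial>\<mu>)
        + ennreal (3 powr p) * (\<integral>\<^sup>+x. ennreal (min 1 (2 * (u x)^2 / (real (Suc n))^2) powr p * g_density x) \<partial>\<mu>)
      < \<eta>"
proof -
  have T1: "(\<lambda>n. Lw_err p (\<lambda>x. arctan_cut (real (Suc n)) (u x))) \<longlonglongrightarrow> 0"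
    and T2: "(\<lambda>n. Lw_err 2 (\<lambda>x. arctan_cut (real (Suc n)) (u x))) \<longlonglongrightarrow> 0"
    using Lw_err_arctan_cut_u_tendsto_0 p_pos u_powr_integral_finite by simp_all
  have \<delta>0: "(\<lambda>n. ennreal (2 * (1 / real (Suc n))^2)) \<longlonglongrightarrow> 0"
    using tendsto_const_div_Suc_square[of 2] by (simp add: power_divide ennreal_tendsto_0_iff)
  have \<delta>: "(\<lambda>n. ennreal (2 * (1 / real (Suc n))^2) * (\<integral>\<^sup>+x. ennreal (v x) \<partial>\<mu>)) \<longlonglongrightarrow> 0"
    using tendsto_cmult_ennreal_0[OF \<delta>0, of "\<integral>\<^sup>+x. ennreal (v x) \<partial>\<mu>"] weight_integral_finite
    by (simp add: mult.commute)
  have L1: "(\<lambda>n. ennreal (2 powr p) * Lw_err p (\<lambda>x. arctan_cut (real (Suc n)) (u x))) \<longlonglongrightarrow> 0"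
    using tendsto_cmult_ennreal_0[OF T1, of "ennreal (2 powr p)"] by simp
  have L2: "(\<lambda>n. ennreal (2 * (1 / real (Suc n))^2) * (\<integral>\<^sup>+x. ennreal (v x) \<partial>\<mu>)
      + ennreal 2 * Lw_err 2 (\<lambda>x. arctan_cut (real (Suc n)) (u x))) \<longlonglongrightarrow> 0"
    using tendsto_cmult_ennreal_0[OF T2, of 2] by (intro tendsto_add_zero \<delta>) simp
  have L3: "(\<lambda>n. ennreal (3 powr p) * (\<integral>\<^sup>+x. ennreal (if g_density x > real n * v x then g_density x else 0) \<partial>\<mu>)
      + ennreal (3 powr p) * (\<integral>\<^sup>+x. ennreal (min 1 (2 * (u x)^2 / (real (Suc n))^2) powr p * g_density x) \<partial>\<mu>))
      \<longlonglongrightarrow> 0"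
    using tendsto_cmult_ennreal_0[OF large_g_density_tendsto_0, of "ennreal (3 powr p)"]
      tendsto_cmult_ennreal_0[OF truncation_weight_tendsto_0, of "ennreal (3 powr p)"]
    by (intro tendsto_add_zero) simp_all
  show ?thesis
    using order_tendstoD(2)[OF L1 assms] order_tendstoD(2)[OF L2 assms] order_tendstoD(2)[OF L3 assms]
    by eventually_elim blast
qed

context
  fixes \<phi> :: "nat \<Rightarrow> _"
  assumes lipc: "\<And>k. lipc \<Omega> (\<phi> k)" and A: "(\<lambda>k. Lw_err p (\<phi> k)) \<longlonglongrightarrow> 0"
begin

lemma eventually_Lw_err_arctan_cut_less:
  assumes "0 < M" and "ennreal (2 powr p) * Lw_err p (\<lambda>x. arctan_cut M (u x)) < \<eta>"
  shows "\<forall>\<^sub>F k in sequentially. Lw_err p (\<lambda>x. arctan_cut M (\<phi> k x)) < \<eta>"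
proof (rule eventually_less_of_le_tendsto)
  show "Lw_err p (\<lambda>x. arctan_cut M (\<phi> k x))
      \<le> ennreal (2 powr p) * Lw_err p (\<phi> k) + ennreal (2 powr p) * Lw_err p (\<lambda>x. arctan_cut M (u x))" for k
    using lipc assms(1) p_pos by (intro Lw_err_arctan_cut_le lipc_borel_measurable)
  show "(\<lambda>k. ennreal (2 powr p) * Lw_err p (\<phi> k) + ennreal (2 powr p) * Lw_err p (\<lambda>x. arctan_cut M (u x)))
      \<longlonglongrightarrow> 0 + ennreal (2 powr p) * Lw_err p (\<lambda>x. arctan_cut M (u x))"
    using A by (intro tendsto_add tendsto_cmult_ennreal_0 tendsto_const) simp_all
qed (use assms(2) in simp)

lemma eventually_Lw_err_2_arctan_cut_less:
  assumes "0 < M" "0 < \<delta>"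
    and "ennreal (2 * \<delta>^2) * (\<integral>\<^sup>+x. ennreal (v x) \<partial>\<mu>) + ennreal 2 * Lw_err 2 (\<lambda>x. arctan_cut M (u x)) < \<eta>"
  shows "\<forall>\<^sub>F k in sequentially. Lw_err 2 (\<lambda>x. arctan_cut M (\<phi> k x)) < \<eta>"
proof (rule eventually_less_of_le_tendsto)
  show "Lw_err 2 (\<lambda>x. arctan_cut M (\<phi> k x)) \<le> ennreal (2 * \<delta>^2) * (\<integral>\<^sup>+x. ennreal (v x) \<partial>\<mu>)
      + ennreal (2 * (M * pi)^2 / \<delta> powr p) * Lw_err p (\<phi> k) + ennreal 2 * Lw_err 2 (\<lambda>x. arctan_cut M (u x))" for k
    using lipc assms(1,2) by (intro Lw_err_2_arctan_cut_le lipc_borel_measurable)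
  show "(\<lambda>k. ennreal (2 * \<delta>^2) * (\<integral>\<^sup>+x. ennreal (v x) \<partial>\<mu>)
      + ennreal (2 * (M * pi)^2 / \<delta> powr p) * Lw_err p (\<phi> k) + ennreal 2 * Lw_err 2 (\<lambda>x. arctan_cut M (u x)))
      \<longlonglongrightarrow> ennreal (2 * \<delta>^2) * (\<integral>\<^sup>+x. ennreal (v x) \<partial>\<mu>) + 0 + ennreal 2 * Lw_err 2 (\<lambda>x. arctan_cut M (u x))"
    using A by (intro tendsto_add tendsto_cmult_ennreal_0 tendsto_const) simp_all
qed (use assms(3) in simp)

lemma eventually_LQ_err_arctan_cut_less:
  assumes B: "(\<lambda>k. LQ_err (\<phi> k)) \<longlonglongrightarrow> 0" and "1 \<le> M" "0 \<le> R"
    and "ennreal (3 powr p) * (\<integral>\<^sup>+x. ennreal (if g_density x > R * v x then g_density x else 0) \<partial>\<mu>)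
      + ennreal (3 powr p) * (\<integral>\<^sup>+x. ennreal (min 1 (2 * (u x)^2 / M^2) powr p * g_density x) \<partial>\<mu>) < \<eta>"
  shows "\<forall>\<^sub>F k in sequentially. LQ_err (\<lambda>x. arctan_cut M (\<phi> k x)) < \<eta>"
proof (rule eventually_less_of_le_tendsto)
  show "LQ_err (\<lambda>x. arctan_cut M (\<phi> k x)) \<le> ennreal (3 powr p) * LQ_err (\<phi> k)
      + (ennreal (3 powr p * R * 2 powr p) * Lw_err p (\<phi> k)
      + ennreal (3 powr p) * (\<integral>\<^sup>+x. ennreal (if g_density x > R * v x then g_density x else 0) \<partial>\<mu>)
      + ennreal (3 powr p) * (\<integral>\<^sup>+x. ennreal (min 1 (2 * (u x)^2 / M^2) powr p * g_density x) \<partial>\<mu>))" for k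
    using lipc assms(2,3) by (intro LQ_err_arctan_cut_le lipc_borel_measurable)
  show "(\<lambda>k. ennreal (3 powr p) * LQ_err (\<phi> k) + (ennreal (3 powr p * R * 2 powr p) * Lw_err p (\<phi> k)
      + ennreal (3 powr p) * (\<integral>\<^sup>+x. ennreal (if g_density x > R * v x then g_density x else 0) \<partial>\<mu>)
      + ennreal (3 powr p) * (\<integral>\<^sup>+x. ennreal (min 1 (2 * (u x)^2 / M^2) powr p * g_density x) \<partial>\<mu>)))
      \<longlonglongrightarrow> 0 + (0 + ennreal (3 powr p) * (\<integral>\<^sup>+x. ennreal (if g_density x > R * v x then g_density x else 0) \<partial>\<mu>)
      + ennreal (3 powr p) * (\<integral>\<^sup>+x. ennreal (min 1 (2 * (u x)^2 / M^2) powr p * g_density x) \<partial>\<mu>))"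
    using A B by (intro tendsto_add tendsto_cmult_ennreal_0 tendsto_const) simp_all
qed (use assms(4) in simp)

text \<open>Truncate at scale \<open>M = n + 1\<close>, with \<open>R = n\<close> and \<open>\<delta> = 1 / (n + 1)\<close>, for an \<open>n\<close> so large that the
  tails are small, and then take \<open>k\<close> large.\<close>

lemma exists_lipc_errs_less:
  assumes B: "(\<lambda>k. LQ_err (\<phi> k)) \<longlonglongrightarrow> 0" and "0 < \<eta>"
  shows "\<exists>\<psi>. lipc \<Omega> \<psi> \<and> Lw_err p \<psi> < \<eta> \<and> LQ_err \<psi> < \<eta> \<and> Lw_err 2 \<psi> < \<eta>"
proof -
  define \<psi> where "\<psi> n k = (\<lambda>x. arctan_cut (real (Suc n)) (\<phi> k x))" for n k
  have "\<forall>\<^sub>F n in sequentially. \<forall>\<^sub>F k in sequentially.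
      Lw_err p (\<psi> n k) < \<eta> \<and> LQ_err (\<psi> n k) < \<eta> \<and> Lw_err 2 (\<psi> n k) < \<eta>"
    using eventually_truncation_tails_less[OF \<open>0 < \<eta>\<close>]
  proof eventually_elim
    case (elim n)
    have "\<forall>\<^sub>F k in sequentially. Lw_err p (\<psi> n k) < \<eta>"
      unfolding \<psi>_def by (rule eventually_Lw_err_arctan_cut_less) (use elim in simp_all)
    moreover have "\<forall>\<^sub>F k in sequentially. LQ_err (\<psi> n k) < \<eta>"
      unfolding \<psi>_def by (rule eventually_LQ_err_arctan_cut_less[OF B, where R = "real n"]) (use elim in simp_all)
    moreover have "\<forall>\<^sub>F k in sequentially. Lw_err 2 (\<psi> n k) < \<eta>"
      unfolding \<psi>_def
      by (rule eventually_Lw_err_2_arctan_cut_less[where \<delta> = "1 / real (Suc n)"]) (use elim in simp_all)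
    ultimately show ?case by eventually_elim blast
  qed
  then obtain n where "\<forall>\<^sub>F k in sequentially.
      Lw_err p (\<psi> n k) < \<eta> \<and> LQ_err (\<psi> n k) < \<eta> \<and> Lw_err 2 (\<psi> n k) < \<eta>"
    using eventually_happens'[OF sequentially_bot] by blast
  then obtain k where "Lw_err p (\<psi> n k) < \<eta>" "LQ_err (\<psi> n k) < \<eta>" "Lw_err 2 (\<psi> n k) < \<eta>"
    using eventually_happens'[OF sequentially_bot] by blast
  moreover have "lipc \<Omega> (\<psi> n k)" unfolding \<psi>_def by (rule lipc_arctan_cut[OF _ lipc]) simp
  ultimately show ?thesis by blast
qed

lemma lipc_seq_errs_tendsto_0:
  assumes B: "(\<lambda>k. LQ_err (\<phi> k)) \<longlonglongrightarrow> 0"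
  obtains \<Psi> where "\<And>j. lipc \<Omega> (\<Psi> j)" "(\<lambda>j. Lw_err p (\<Psi> j)) \<longlonglongrightarrow> 0"
    "(\<lambda>j. LQ_err (\<Psi> j)) \<longlonglongrightarrow> 0" "(\<lambda>j. Lw_err 2 (\<Psi> j)) \<longlonglongrightarrow> 0"
proof -
  have "\<forall>j. \<exists>\<psi>. lipc \<Omega> \<psi> \<and> Lw_err p \<psi> < ennreal (1 / Suc j) \<and> LQ_err \<psi> < ennreal (1 / Suc j)
      \<and> Lw_err 2 \<psi> < ennreal (1 / Suc j)"
    using exists_lipc_errs_less[OF B] by simp
  then obtain \<Psi> where \<Psi>: "\<And>j. lipc \<Omega> (\<Psi> j)" "\<And>j. Lw_err p (\<Psi> j) < ennreal (1 / Suc j)"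
    "\<And>j. LQ_err (\<Psi> j) < ennreal (1 / Suc j)" "\<And>j. Lw_err 2 (\<Psi> j) < ennreal (1 / Suc j)"
    by metis
  have lim: "(\<lambda>j. ennreal (1 / Suc j)) \<longlonglongrightarrow> 0"
    using LIMSEQ_inverse_real_of_nat by (simp add: inverse_eq_divide ennreal_tendsto_0_iff)
  have "(\<lambda>j. Lw_err p (\<Psi> j)) \<longlonglongrightarrow> 0" "(\<lambda>j. LQ_err (\<Psi> j)) \<longlonglongrightarrow> 0" "(\<lambda>j. Lw_err 2 (\<Psi> j)) \<longlonglongrightarrow> 0"
    using \<Psi>(2-4) by (auto intro!: tendsto_sandwich[OF _ _ tendsto_const lim] always_eventually intro: less_imp_le)
  with \<Psi>(1) show ?thesis by (rule that)
qed

end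

end

theorem proposition3p6:
  fixes \<Omega> :: "(real^'n) set" and p :: real
    and Q :: "real^'n \<Rightarrow> real^'n^'n" and v :: "real^'n \<Rightarrow> real"
  assumes "CARD('n) \<ge> 3"
    and "open \<Omega>" and "connected \<Omega>" and "\<Omega> \<noteq> {}" and "bounded \<Omega>"
    and "1 < p"
    and "hypH p Q v \<Omega>"
  shows "\<forall>u g. in_H0 p Q v \<Omega> u g \<and> Lw_mem 2 v \<Omega> u \<longrightarrow>
           (\<exists>\<phi>. (\<forall>k. lipc \<Omega> (\<phi> k)) \<and>
              (\<lambda>k. H_norm p Q v \<Omega> (\<lambda>x. \<phi> k x - u x) (\<lambda>x. lgrad (\<phi> k) x - g x)
                   + Lw_norm 2 v \<Omega> (\<lambda>x. \<phi> k x - u x)) \<longlonglongrightarrow> 0)"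
proof (intro allI impI, elim conjE)
  fix u g
  assume "in_H0 p Q v \<Omega> u g" and u_L2: "Lw_mem 2 v \<Omega> u"
  then obtain \<phi> where u_Lp: "Lw_mem p v \<Omega> u" and g_LQ: "LQ_mem p Q \<Omega> g" and lipc: "\<And>k. lipc \<Omega> (\<phi> k)"
    and lim: "(\<lambda>k. H_norm p Q v \<Omega> (\<lambda>x. \<phi> k x - u x) (\<lambda>x. lgrad (\<phi> k) x - g x)) \<longlonglongrightarrow> 0"
    unfolding in_H0_def by blast
  interpret weighted_sobolev_target \<Omega> p Q v u g
    by unfold_locales (use assms(2,6,7) u_Lp u_L2 g_LQ in simp_all)
  obtain \<Psi> where \<Psi>: "\<And>j. lipc \<Omega> (\<Psi> j)" and errs: "(\<lambda>j. Lw_err p (\<Psi> j)) \<longlonglongrightarrow> 0"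
    "(\<lambda>j. LQ_err (\<Psi> j)) \<longlonglongrightarrow> 0" "(\<lambda>j. Lw_err 2 (\<Psi> j)) \<longlonglongrightarrow> 0"
    using lipc_seq_errs_tendsto_0[OF lipc errs_tendsto_0_of_H_norm[OF lipc lim]] by blast
  have "(\<lambda>j. enn2real (Lw_err p (\<Psi> j)) powr (1 / p) + enn2real (LQ_err (\<Psi> j)) powr (1 / p)
      + enn2real (Lw_err 2 (\<Psi> j)) powr (1 / 2)) \<longlonglongrightarrow> 0 + 0 + 0"
    using p_pos by (intro tendsto_add enn2real_powr_tendsto_0 errs) simp_all
  with \<Psi> show "\<exists>\<phi>. (\<forall>k. lipc \<Omega> (\<phi> k)) \<and>
      (\<lambda>k. H_norm p Q v \<Omega> (\<lambda>x. \<phi> k x - u x) (\<lambda>x. lgrad (\<phi> k) x - g x)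
         + Lw_norm 2 v \<Omega> (\<lambda>x. \<phi> k x - u x)) \<longlonglongrightarrow> 0"
    unfolding H_norm_eq Lw_norm_2_eq by auto
qed

end
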